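(* Suppose that $(G,\mathcal P)$ is relatively hyperbolic, where $\mathcal P$ is a $C$-almost malnormal collection of slender subgroups. If $G$ admits a nontrivial splitting over a parabolic subgroup, then $G$ admits a nontrivial $(2,C)$-acylindrical splitting over a parabolic subgroup.
   Context: Relative hyperbolicity: $G$ finitely generated, $\mathcal P$ a finite collection of finitely generated subgroups, none equal to $G$, with $G$ hyperbolic relative to $\mathcal P$. Parabolic: conjugate into some $P\in\mathcal P$. Slender: every subgroup finitely generated. $\mathcal P$ is $C$-almost malnormal if whenever $P_1,P_2\in\mathcal P$, $g\in G$ and $\#(P_1\cap gP_2g^{-1})>C$, we have $P_1=P_2$ and $g\in P_1$. A splitting is nontrivial if its Bass–Serre tree action has no global fixed point. An action on a tree is $(k,C)$-acylindrical if the stabilizer of every segment of length at least $k+1$ has cardinality at most $C$. *)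

theory Defs
  imports "HOL-Algebra.Algebra"
begin

definition simple_graph :: "'v set \<Rightarrow> ('v \<Rightarrow> 'v \<Rightarrow> bool) \<Rightarrow> bool" where
  "simple_graph V Adj \<longleftrightarrow> (\<forall>u v. Adj u v \<longrightarrow> u \<in> V \<and> v \<in> V \<and> u \<noteq> v \<and> Adj v u)"

definition gwalk :: "('v \<Rightarrow> 'v \<Rightarrow> bool) \<Rightarrow> 'v list \<Rightarrow> bool" where
  "gwalk Adj xs \<longleftrightarrow> xs \<noteq> [] \<and> (\<forall>i. Suc i < length xs \<longrightarrow> Adj (xs ! i) (xs ! Suc i))"

definition graph_connected :: "'v set \<Rightarrow> ('v \<Rightarrow> 'v \<Rightarrow> bool) \<Rightarrow> bool" where
  "graph_connected V Adj \<longleftrightarrow>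
     (\<forall>u\<in>V. \<forall>v\<in>V. \<exists>xs. gwalk Adj xs \<and> hd xs = u \<and> last xs = v)"

definition gdist :: "('v \<Rightarrow> 'v \<Rightarrow> bool) \<Rightarrow> 'v \<Rightarrow> 'v \<Rightarrow> nat" where
  "gdist Adj u v = (LEAST n. \<exists>xs. gwalk Adj xs \<and> hd xs = u \<and> last xs = v \<and> length xs = Suc n)"

definition gromov_product :: "('v \<Rightarrow> 'v \<Rightarrow> bool) \<Rightarrow> 'v \<Rightarrow> 'v \<Rightarrow> 'v \<Rightarrow> real" where
  "gromov_product Adj x y w =
     (real (gdist Adj x w) + real (gdist Adj y w) - real (gdist Adj x y)) / 2"

text \<open>Gromov hyperbolicity of a connected graph (four-point condition on vertices).\<close>
definition hyperbolic_graph :: "'v set \<Rightarrow> ('v \<Rightarrow> 'v \<Rightarrow> bool) \<Rightarrow> bool" where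
  "hyperbolic_graph V Adj \<longleftrightarrow> graph_connected V Adj \<and>
     (\<exists>\<delta>::real. \<forall>x\<in>V. \<forall>y\<in>V. \<forall>z\<in>V. \<forall>w\<in>V.
        gromov_product Adj x y w \<ge> min (gromov_product Adj x z w) (gromov_product Adj y z w) - \<delta>)"

definition cycle_list :: "('v \<Rightarrow> 'v \<Rightarrow> bool) \<Rightarrow> 'v list \<Rightarrow> bool" where
  "cycle_list Adj c \<longleftrightarrow> length c \<ge> 3 \<and> distinct c \<and> gwalk Adj c \<and> Adj (last c) (hd c)"

text \<open>Fine (Bowditch): each edge lies in only finitely many circuits of each length n.
  Circuits through the edge uv correspond bijectively to cycle lists starting u, v.\<close>
definition fine_graph :: "'v set \<Rightarrow> ('v \<Rightarrow> 'v \<Rightarrow> bool) \<Rightarrow> bool" where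
  "fine_graph V Adj \<longleftrightarrow> (\<forall>u v. Adj u v \<longrightarrow>
     (\<forall>n. finite {c. cycle_list Adj c \<and> length c = n \<and> c ! 0 = u \<and> c ! 1 = v}))"

definition is_tree :: "'v set \<Rightarrow> ('v \<Rightarrow> 'v \<Rightarrow> bool) \<Rightarrow> bool" where
  "is_tree V Adj \<longleftrightarrow> simple_graph V Adj \<and> V \<noteq> {} \<and> graph_connected V Adj \<and>
     \<not> (\<exists>c. cycle_list Adj c)"

definition graph_action :: "('g, 'b) monoid_scheme \<Rightarrow> 'v set \<Rightarrow> ('v \<Rightarrow> 'v \<Rightarrow> bool) \<Rightarrow> ('g \<Rightarrow> 'v \<Rightarrow> 'v) \<Rightarrow> bool" where
  "graph_action G V Adj \<phi> \<longleftrightarrow> group_action G V \<phi> \<and>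
     (\<forall>g\<in>carrier G. \<forall>u v. Adj u v \<longrightarrow> Adj (\<phi> g u) (\<phi> g v))"

definition pstab :: "('g, 'b) monoid_scheme \<Rightarrow> ('g \<Rightarrow> 'v \<Rightarrow> 'v) \<Rightarrow> 'v set \<Rightarrow> 'g set" where
  "pstab G \<phi> S = {g \<in> carrier G. \<forall>x\<in>S. \<phi> g x = x}"

definition finitely_many_edge_orbits :: "('g, 'b) monoid_scheme \<Rightarrow> ('v \<Rightarrow> 'v \<Rightarrow> bool) \<Rightarrow> ('g \<Rightarrow> 'v \<Rightarrow> 'v) \<Rightarrow> bool" where
  "finitely_many_edge_orbits G Adj \<phi> \<longleftrightarrow> (\<exists>F. finite F \<and>
     (\<forall>u v. Adj u v \<longrightarrow> (\<exists>(a, b)\<in>F. \<exists>g\<in>carrier G. \<phi> g a = u \<and> \<phi> g b = v)))"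

definition without_inversions :: "('g, 'b) monoid_scheme \<Rightarrow> ('v \<Rightarrow> 'v \<Rightarrow> bool) \<Rightarrow> ('g \<Rightarrow> 'v \<Rightarrow> 'v) \<Rightarrow> bool" where
  "without_inversions G Adj \<phi> \<longleftrightarrow>
     (\<forall>g\<in>carrier G. \<forall>u v. Adj u v \<longrightarrow> \<not> (\<phi> g u = v \<and> \<phi> g v = u))"

definition fin_gen :: "('g, 'b) monoid_scheme \<Rightarrow> bool" where
  "fin_gen G \<longleftrightarrow> (\<exists>S. finite S \<and> S \<subseteq> carrier G \<and> generate G S = carrier G)"

definition slender_subgroup :: "('g, 'b) monoid_scheme \<Rightarrow> 'g set \<Rightarrow> bool" where
  "slender_subgroup G P \<longleftrightarrow>
     (\<forall>H. subgroup H G \<and> H \<subseteq> P \<longrightarrow> fin_gen (G\<lparr>carrier := H\<rparr>))"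

definition conjg :: "('g, 'b) monoid_scheme \<Rightarrow> 'g \<Rightarrow> 'g set \<Rightarrow> 'g set" where
  "conjg G g H = (\<lambda>h. g \<otimes>\<^bsub>G\<^esub> h \<otimes>\<^bsub>G\<^esub> inv\<^bsub>G\<^esub> g) ` H"

text \<open>The graph has countably many vertices (G is countable), so its vertex
  type can be taken to be nat.\<close>
definition rel_hyp :: "('g, 'b) monoid_scheme \<Rightarrow> 'g set set \<Rightarrow> bool" where
  "rel_hyp G \<P> \<longleftrightarrow> group G \<and> fin_gen G \<and> finite \<P> \<and>
     (\<forall>P\<in>\<P>. subgroup P G \<and> fin_gen (G\<lparr>carrier := P\<rparr>) \<and> P \<noteq> carrier G) \<and>
     (\<exists>(V::nat set) Adj \<phi>.
        simple_graph V Adj \<and> hyperbolic_graph V Adj \<and> fine_graph V Adj \<and>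
        graph_action G V Adj \<phi> \<and> finitely_many_edge_orbits G Adj \<phi> \<and>
        (\<forall>u v. Adj u v \<longrightarrow> finite (pstab G \<phi> {u, v})) \<and>
        (\<forall>P\<in>\<P>. \<exists>v\<in>V. P = pstab G \<phi> {v} \<and> infinite P) \<and>
        (\<forall>v\<in>V. infinite (pstab G \<phi> {v}) \<longrightarrow>
           (\<exists>P\<in>\<P>. \<exists>g\<in>carrier G. pstab G \<phi> {v} = conjg G g P)) \<and>
        (\<forall>P1\<in>\<P>. \<forall>P2\<in>\<P>. \<forall>g\<in>carrier G. P1 = conjg G g P2 \<longrightarrow> P1 = P2))"

definition parabolic :: "('g, 'b) monoid_scheme \<Rightarrow> 'g set set \<Rightarrow> 'g set \<Rightarrow> bool" where
  "parabolic G \<P> H \<longleftrightarrow> (\<exists>P\<in>\<P>. \<exists>g\<in>carrier G. H \<subseteq> conjg G g P)"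

definition almost_malnormal :: "('g, 'b) monoid_scheme \<Rightarrow> 'g set set \<Rightarrow> nat \<Rightarrow> bool" where
  "almost_malnormal G \<P> C \<longleftrightarrow> (\<forall>P1\<in>\<P>. \<forall>P2\<in>\<P>. \<forall>g\<in>carrier G.
     \<not> (finite (P1 \<inter> conjg G g P2) \<and> card (P1 \<inter> conjg G g P2) \<le> C) \<longrightarrow>
     P1 = P2 \<and> g \<in> P1)"

text \<open>A splitting of G (a finite graph of groups decomposition) is encoded by its
  Bass--Serre tree: an action on a simplicial tree without inversions with finitely many
  orbits of edges.  Such a tree is countable, so vertices are taken in nat.\<close>
definition splitting :: "('g, 'b) monoid_scheme \<Rightarrow> nat set \<Rightarrow> (nat \<Rightarrow> nat \<Rightarrow> bool) \<Rightarrow> ('g \<Rightarrow> nat \<Rightarrow> nat) \<Rightarrow> bool" where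
  "splitting G V Adj \<phi> \<longleftrightarrow> is_tree V Adj \<and> graph_action G V Adj \<phi> \<and>
     without_inversions G Adj \<phi> \<and> finitely_many_edge_orbits G Adj \<phi>"

definition nontrivial_action :: "('g, 'b) monoid_scheme \<Rightarrow> 'v set \<Rightarrow> ('g \<Rightarrow> 'v \<Rightarrow> 'v) \<Rightarrow> bool" where
  "nontrivial_action G V \<phi> \<longleftrightarrow> \<not> (\<exists>x\<in>V. \<forall>g\<in>carrier G. \<phi> g x = x)"

definition over_parabolic :: "('g, 'b) monoid_scheme \<Rightarrow> 'g set set \<Rightarrow> ('v \<Rightarrow> 'v \<Rightarrow> bool) \<Rightarrow> ('g \<Rightarrow> 'v \<Rightarrow> 'v) \<Rightarrow> bool" where
  "over_parabolic G \<P> Adj \<phi> \<longleftrightarrow> (\<forall>u v. Adj u v \<longrightarrow> parabolic G \<P> (pstab G \<phi> {u, v}))"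

text \<open>(k,C)-acylindrical: the pointwise stabilizer of every segment (a walk without
  repeated vertices) of length at least k+1 has at most C elements.\<close>
definition acylindrical :: "('g, 'b) monoid_scheme \<Rightarrow> ('v \<Rightarrow> 'v \<Rightarrow> bool) \<Rightarrow> ('g \<Rightarrow> 'v \<Rightarrow> 'v) \<Rightarrow> nat \<Rightarrow> nat \<Rightarrow> bool" where
  "acylindrical G Adj \<phi> k C \<longleftrightarrow> (\<forall>xs. gwalk Adj xs \<and> distinct xs \<and> length xs \<ge> k + 2 \<longrightarrow>
     finite (pstab G \<phi> (set xs)) \<and> card (pstab G \<phi> (set xs)) \<le> C)"

end

theory Submission
  imports Defs "HOL-Library.Nat_Bijection"
begin

text \<open>Following Guirardel and Levitt, the given Bass--Serre tree \<open>T\<close> is replaced by its tree of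
  cylinders. Two edges of \<open>T\<close> are equivalent if they are joined by a chain of adjacent edges whose
  stabilizers lie in a common conjugate of a peripheral subgroup; edges whose stabilizer has at most
  \<open>C\<close> elements are equivalent only to themselves. The cylinders (equivalence classes) are subtrees
  meeting pairwise in at most a vertex, so the bipartite graph joining each vertex of \<open>T\<close> to the
  cylinders containing an edge at it is again a tree, on which \<open>G\<close> acts with finitely many orbits
  of edges and without a global fixed point. An element stabilizing a cylinder of large edges
  normalizes the corresponding conjugate of a peripheral subgroup and so, by almost malnormality,
  lies in it; hence the new edge stabilizers are parabolic. A segment with three edges passes
  through two distinct cylinders at a common vertex, and their joint stabilizer lies in the
  intersection of two distinct peripheral conjugates or in a small edge stabilizer, so it has at
  most \<open>C\<close> elements.\<close>

section \<open>Walks, connectivity and trees\<close>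

lemma gwalk_Nil [simp]: "\<not> gwalk R []"
  by (simp add: gwalk_def)

lemma gwalk_singleton [simp]: "gwalk R [x]"
  by (simp add: gwalk_def)

lemma gwalk_Cons_Cons [simp]: "gwalk R (x # y # xs) \<longleftrightarrow> R x y \<and> gwalk R (y # xs)"
  unfolding gwalk_def by (auto simp: nth_Cons split: nat.splits)

lemma gwalk_ConsD: "gwalk R (x # xs) \<Longrightarrow> xs \<noteq> [] \<Longrightarrow> gwalk R xs"
  by (cases xs) auto

lemma gwalk_nth: "gwalk R xs \<Longrightarrow> Suc i < length xs \<Longrightarrow> R (xs ! i) (xs ! Suc i)"
  unfolding gwalk_def by blast

lemma gwalk_append_Cons:
  "gwalk R (xs @ y # ys) \<longleftrightarrow> gwalk R (xs @ [y]) \<and> gwalk R (y # ys)"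
proof (induction xs)
  case Nil then show ?case by (cases ys) auto
next
  case (Cons a xs) then show ?case by (cases xs) auto
qed

lemma gwalk_snoc: "gwalk R xs \<Longrightarrow> R (last xs) x \<Longrightarrow> gwalk R (xs @ [x])"
  by (induction xs rule: induct_list012) auto

lemma gwalk_take: "gwalk R xs \<Longrightarrow> 0 < k \<Longrightarrow> gwalk R (take k xs)"
proof (induction xs arbitrary: k rule: induct_list012)
  case (3 x y zs)
  show ?case
  proof (cases k)
    case (Suc m)
    then show ?thesis using "3.IH"(2)[of m] "3.prems"(1) by (cases m) auto
  qed (use "3.prems" in simp)
qed auto

lemma gwalk_mono: "gwalk R xs \<Longrightarrow> (\<And>x y. R x y \<Longrightarrow> R' x y) \<Longrightarrow> gwalk R' xs"
  by (induction xs rule: induct_list012) auto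

lemma gwalk_map: "gwalk R xs \<Longrightarrow> (\<And>x y. R x y \<Longrightarrow> R' (f x) (f y)) \<Longrightarrow> gwalk R' (map f xs)"
  by (induction xs rule: induct_list012) auto

lemma gwalk_set_subset:
  "gwalk R xs \<Longrightarrow> 2 \<le> length xs \<Longrightarrow> (\<And>x y. R x y \<Longrightarrow> x \<in> A \<and> y \<in> A) \<Longrightarrow> set xs \<subseteq> A"
proof (induction xs rule: induct_list012)
  case (3 x y zs)
  then show ?case by (cases zs) auto
qed auto

lemma gwalk_rtranclp: "gwalk R xs \<Longrightarrow> R\<^sup>*\<^sup>* (hd xs) (last xs)"
  by (induction xs rule: induct_list012) (auto intro: converse_rtranclp_into_rtranclp)

lemma gwalk_remove_loops:
  assumes "gwalk R xs"
  shows "\<exists>ys. gwalk R ys \<and> hd ys = hd xs \<and> last ys = last xs \<and> distinct ys"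
  using assms
proof (induction "length xs" arbitrary: xs rule: less_induct)
  case less
  show ?case
  proof (cases "distinct xs")
    case False
    then obtain as z bs cs where xs: "xs = as @ [z] @ bs @ [z] @ cs"
      using not_distinct_decomp by blast
    have "gwalk R (as @ z # bs @ z # cs)" using less.prems xs by simp
    then have "gwalk R (as @ [z])" "gwalk R ((z # bs) @ z # cs)"
      using gwalk_append_Cons[of R as z "bs @ z # cs"] by simp_all
    then have "gwalk R (as @ z # cs)"
      using gwalk_append_Cons[of R "z # bs" z cs] gwalk_append_Cons[of R as z cs] by blast
    moreover have "hd (as @ z # cs) = hd xs" "last (as @ z # cs) = last xs"
      unfolding xs by (cases as; simp) (cases cs; simp)
    ultimately show ?thesis using less.hyps[of "as @ z # cs"] xs by fastforce
  qed (use less.prems in blast)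
qed

lemma rtranclp_imp_distinct_gwalk:
  assumes "R\<^sup>*\<^sup>* x y"
  shows "\<exists>xs. gwalk R xs \<and> hd xs = x \<and> last xs = y \<and> distinct xs"
proof -
  have "\<exists>xs. gwalk R xs \<and> hd xs = x \<and> last xs = y"
    using assms
  proof (induction rule: converse_rtranclp_induct)
    case base then show ?case by (intro exI[of _ "[y]"]) simp
  next
    case (step x z)
    then obtain xs where "gwalk R xs" "hd xs = z" "last xs = y" by blast
    with step.hyps(1) show ?case by (intro exI[of _ "x # xs"]) (cases xs; auto)
  qed
  then show ?thesis using gwalk_remove_loops by metis
qed

lemma graph_connected_iff_rtranclp: "graph_connected V R \<longleftrightarrow> (\<forall>u\<in>V. \<forall>v\<in>V. R\<^sup>*\<^sup>* u v)"
  unfolding graph_connected_def using gwalk_rtranclp rtranclp_imp_distinct_gwalk by metis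

lemma cycle_list_rotate1: "cycle_list R c \<Longrightarrow> cycle_list R (rotate1 c)"
proof -
  assume c: "cycle_list R c"
  then obtain x xs where x: "c = x # xs"
    unfolding cycle_list_def by (cases c) auto
  with c have "xs \<noteq> []" unfolding cycle_list_def by auto
  have walk: "gwalk R (x # xs)" and "R (last xs) x"
    using c x \<open>xs \<noteq> []\<close> unfolding cycle_list_def by auto
  then have "gwalk R (xs @ [x])" using gwalk_snoc[OF gwalk_ConsD[OF walk \<open>xs \<noteq> []\<close>]] by blast
  moreover have "R x (hd xs)" using walk \<open>xs \<noteq> []\<close> by (auto simp: neq_Nil_conv)
  ultimately show ?thesis using c x \<open>xs \<noteq> []\<close> unfolding cycle_list_def by simp
qed

fun no_backtrack :: "'v list \<Rightarrow> bool" where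
  "no_backtrack (x # y # z # xs) \<longleftrightarrow> x \<noteq> z \<and> no_backtrack (y # z # xs)"
| "no_backtrack _ \<longleftrightarrow> True"

lemma distinct_imp_no_backtrack: "distinct xs \<Longrightarrow> no_backtrack xs"
  by (induction xs rule: no_backtrack.induct) auto

lemma no_backtrack_ConsD: "no_backtrack (x # xs) \<Longrightarrow> no_backtrack xs"
  by (cases xs rule: no_backtrack.cases) auto

lemma no_backtrack_append_Cons:
  "no_backtrack (xs @ [y]) \<Longrightarrow> no_backtrack (y # ys) \<Longrightarrow> (xs \<noteq> [] \<Longrightarrow> ys \<noteq> [] \<Longrightarrow> last xs \<noteq> hd ys)
   \<Longrightarrow> no_backtrack (xs @ y # ys)"
proof (induction xs rule: no_backtrack.induct)
  case ("2_2" x)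
  then show ?case by (cases ys) auto
next
  case ("2_3" x z)
  then show ?case by (cases ys) auto
qed simp_all

lemma acyclic_no_backtrack_distinct:
  assumes acyclic: "\<not> (\<exists>c. cycle_list R c)" and irrefl: "\<And>x. \<not> R x x"
  shows "gwalk R xs \<Longrightarrow> no_backtrack xs \<Longrightarrow> distinct xs"
proof (induction xs)
  case (Cons x xs)
  show ?case
  proof (cases "xs = []")
    case False
    have walk: "gwalk R (x # xs)" by fact
    have dist: "distinct xs"
      using Cons.IH gwalk_ConsD[OF walk False] no_backtrack_ConsD[OF Cons.prems(2)] by blast
    have "x \<notin> set xs"
    proof
      assume "x \<in> set xs"
      then obtain k where k: "k < length xs" "xs ! k = x" by (metis in_set_conv_nth)
      have "k \<noteq> 0"
      proof
        assume "k = 0"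
        then show False using gwalk_nth[OF walk, of 0] irrefl k by simp
      qed
      moreover have "k \<noteq> 1"
        using Cons.prems(2) k by (cases xs rule: no_backtrack.cases) auto
      ultimately have "cycle_list R (x # take k xs)"
        unfolding cycle_list_def
      proof (intro conjI)
        show "distinct (x # take k xs)"
          using dist k by (auto simp: in_set_conv_nth nth_eq_iff_index_eq)
        show "gwalk R (x # take k xs)" using gwalk_take[OF walk, of "Suc k"] by simp
        have "R (xs ! (k - 1)) (xs ! k)"
          using gwalk_nth[OF gwalk_ConsD[OF walk False], of "k - 1"] k \<open>k \<noteq> 0\<close> by simp
        then show "R (last (x # take k xs)) (hd (x # take k xs))"
          using k \<open>k \<noteq> 0\<close> False by (simp add: last_conv_nth min_def)
      qed (use k in auto)
      then show False using acyclic by blast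
    qed
    then show ?thesis using dist by simp
  qed simp
qed simp

text \<open>Concatenating the two paths gives a closed walk without backtracking.\<close>
lemma acyclic_no_complementary_paths:
  assumes acyclic: "\<not> (\<exists>c. cycle_list R c)" and irrefl: "\<And>x. \<not> R x x"
    and A_sym: "\<And>u v. A u v \<Longrightarrow> A v u"
    and path_A: "(\<lambda>u v. R u v \<and> A u v)\<^sup>*\<^sup>* a b"
    and path_not_A: "(\<lambda>u v. R u v \<and> \<not> A u v)\<^sup>*\<^sup>* b a"
    and "a \<noteq> b"
  shows False
proof -
  obtain ps where ps: "gwalk (\<lambda>u v. R u v \<and> A u v) ps" "hd ps = a" "last ps = b" "distinct ps"
    using rtranclp_imp_distinct_gwalk[OF path_A] by blast
  obtain qs where qs: "gwalk (\<lambda>u v. R u v \<and> \<not> A u v) qs" "hd qs = b" "last qs = a" "distinct qs"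
    using rtranclp_imp_distinct_gwalk[OF path_not_A] by blast
  define p where "p = butlast ps"
  define q where "q = tl qs"
  have "ps \<noteq> []" "qs \<noteq> []" using ps(1) qs(1) by auto
  then have "ps = p @ [b]" "qs = b # q"
    using ps(3) qs(2) unfolding p_def q_def by (metis append_butlast_last_id, metis list.collapse)
  then have p: "gwalk (\<lambda>u v. R u v \<and> A u v) (p @ [b])" "hd (p @ [b]) = a" "distinct (p @ [b])"
    and q: "gwalk (\<lambda>u v. R u v \<and> \<not> A u v) (b # q)" "last (b # q) = a" "distinct (b # q)"
    using ps qs by simp_all
  have "p \<noteq> []" "q \<noteq> []" using p(2) q(2) \<open>a \<noteq> b\<close> by auto
  have last_p: "A (last p) b"
    using gwalk_nth[OF p(1), of "length p - 1"] \<open>p \<noteq> []\<close> by (simp add: nth_append last_conv_nth)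
  have hd_q: "\<not> A b (hd q)"
    using q(1) \<open>q \<noteq> []\<close> by (cases q) auto
  let ?w = "p @ b # q"
  have "gwalk R (p @ [b])" "gwalk R (b # q)"
    by (rule gwalk_mono[OF p(1)], simp, rule gwalk_mono[OF q(1)], simp)
  then have "gwalk R ?w" using gwalk_append_Cons[of R p b q] by blast
  moreover have "no_backtrack ?w"
  proof (rule no_backtrack_append_Cons)
    show "no_backtrack (p @ [b])" "no_backtrack (b # q)"
      using p(3) q(3) by (simp_all add: distinct_imp_no_backtrack)
    show "last p \<noteq> hd q" using A_sym[OF last_p] hd_q by auto
  qed
  ultimately have "distinct ?w" using acyclic_no_backtrack_distinct[OF acyclic irrefl] by blast
  moreover have "hd p = a" "last q = a" using p(2) q(2) \<open>p \<noteq> []\<close> \<open>q \<noteq> []\<close> by simp_all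
  moreover have "hd p \<in> set p" "last q \<in> set q" using \<open>p \<noteq> []\<close> \<open>q \<noteq> []\<close> by simp_all
  ultimately show False by auto
qed

section \<open>Group actions and conjugation\<close>

lemma group_actionI:
  fixes G (structure)
  assumes G: "group G"
    and ext: "\<And>g. g \<in> carrier G \<Longrightarrow> f g \<in> extensional E"
    and closed: "\<And>g x. g \<in> carrier G \<Longrightarrow> x \<in> E \<Longrightarrow> f g x \<in> E"
    and one: "\<And>x. x \<in> E \<Longrightarrow> f \<one> x = x"
    and mult: "\<And>g h x. g \<in> carrier G \<Longrightarrow> h \<in> carrier G \<Longrightarrow> x \<in> E \<Longrightarrow> f (g \<otimes> h) x = f g (f h x)"
  shows "group_action G E f"
proof -
  interpret group G by (rule G)
  have inv_left: "f (inv g) (f g x) = x" and inv_right: "f g (f (inv g) x) = x"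
    if "g \<in> carrier G" "x \<in> E" for g x
    using mult[of "inv g" g x] mult[of g "inv g" x] one[of x] that by simp_all
  have bij: "f g \<in> Bij E" if g: "g \<in> carrier G" for g
    unfolding Bij_def
  proof (intro IntI CollectI ext[OF g])
    show "bij_betw (f g) E E"
      by (rule bij_betw_byWitness[where f' = "f (inv g)"])
        (use g inv_left inv_right closed in auto)
  qed
  have "f \<in> hom G (BijGroup E)"
  proof (rule homI)
    show "f g \<in> carrier (BijGroup E)" if "g \<in> carrier G" for g
      using bij that by (simp add: BijGroup_def)
    fix g h assume g: "g \<in> carrier G" and h: "h \<in> carrier G"
    have "f (g \<otimes> h) = compose E (f g) (f h)"
      by (rule extensionalityI[of _ E]) (use ext g h mult in \<open>auto simp: compose_def\<close>)
    then show "f (g \<otimes> h) = f g \<otimes>\<^bsub>BijGroup E\<^esub> f h"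
      using bij g h by (simp add: BijGroup_def)
  qed
  then show ?thesis
    unfolding group_action_def group_hom_def group_hom_axioms_def using G group_BijGroup by blast
qed

lemma conjg_mono: "A \<subseteq> B \<Longrightarrow> conjg G g A \<subseteq> conjg G g B"
  unfolding conjg_def by auto

context group
begin

lemma conjg_subset_carrier: "g \<in> carrier G \<Longrightarrow> H \<subseteq> carrier G \<Longrightarrow> conjg G g H \<subseteq> carrier G"
  unfolding conjg_def by auto

lemma conjg_mem: "g \<in> carrier G \<Longrightarrow> x \<in> H \<Longrightarrow> g \<otimes> x \<otimes> inv g \<in> conjg G g H"
  unfolding conjg_def by blast

lemma conjg_mult:
  assumes "g \<in> carrier G" "h \<in> carrier G" "H \<subseteq> carrier G"
  shows "conjg G (g \<otimes> h) H = conjg G g (conjg G h H)"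
  unfolding conjg_def image_image
proof (rule image_cong[OF refl])
  fix x assume "x \<in> H"
  then show "g \<otimes> h \<otimes> x \<otimes> inv (g \<otimes> h) = g \<otimes> (h \<otimes> x \<otimes> inv h) \<otimes> inv g"
    using assms by (simp add: subsetD inv_mult_group m_assoc)
qed

lemma conjg_one: "H \<subseteq> carrier G \<Longrightarrow> conjg G \<one> H = H"
  unfolding conjg_def by (auto simp: subsetD image_iff)

lemma conjg_inv_conjg: "g \<in> carrier G \<Longrightarrow> H \<subseteq> carrier G \<Longrightarrow> conjg G (inv g) (conjg G g H) = H"
  using conjg_mult[of "inv g" g H] conjg_one by simp

lemma conjg_conjg_inv: "g \<in> carrier G \<Longrightarrow> H \<subseteq> carrier G \<Longrightarrow> conjg G g (conjg G (inv g) H) = H"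
  using conjg_mult[of g "inv g" H] conjg_one by simp

lemma inj_on_conjugation: "g \<in> carrier G \<Longrightarrow> inj_on (\<lambda>x. g \<otimes> x \<otimes> inv g) (carrier G)"
  unfolding inj_on_def by (simp add: m_assoc)

lemma conjg_finite_card:
  assumes "g \<in> carrier G" "H \<subseteq> carrier G"
  shows "finite (conjg G g H) \<longleftrightarrow> finite H" and "card (conjg G g H) = card H"
proof -
  have "inj_on (\<lambda>x. g \<otimes> x \<otimes> inv g) H"
    using inj_on_conjugation[OF assms(1)] assms(2) inj_on_subset by blast
  then show "finite (conjg G g H) \<longleftrightarrow> finite H" "card (conjg G g H) = card H"
    unfolding conjg_def by (auto simp: card_image finite_image_iff)
qed

lemma conjg_Int:
  "g \<in> carrier G \<Longrightarrow> A \<subseteq> carrier G \<Longrightarrow> B \<subseteq> carrier G \<Longrightarrow>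
   conjg G g (A \<inter> B) = conjg G g A \<inter> conjg G g B"
  unfolding conjg_def by (rule inj_on_image_Int[OF inj_on_conjugation])

lemma conjg_carrier:
  assumes h: "h \<in> carrier G"
  shows "conjg G h (carrier G) = carrier G"
proof
  show "conjg G h (carrier G) \<subseteq> carrier G" using conjg_subset_carrier h by blast
  have "conjg G h (conjg G (inv h) (carrier G)) \<subseteq> conjg G h (carrier G)"
    using conjg_subset_carrier h by (intro conjg_mono) simp
  then show "carrier G \<subseteq> conjg G h (carrier G)" using conjg_conjg_inv[OF h] by simp
qed

lemma conjg_subgroup_self:
  assumes "subgroup H G" "h \<in> H"
  shows "conjg G h H = H"
proof -
  have h: "h \<in> carrier G" and H: "H \<subseteq> carrier G" using assms subgroup.subset by blast+
  have "conjg G h H \<subseteq> H"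
    unfolding conjg_def using assms by (auto intro!: subgroup.m_closed subgroup.m_inv_closed)
  moreover have "conjg G (inv h) H \<subseteq> H"
    unfolding conjg_def using assms by (auto intro!: subgroup.m_closed subgroup.m_inv_closed simp: h)
  then have "H \<subseteq> conjg G h H" using conjg_conjg_inv[OF h H] conjg_mono by metis
  ultimately show ?thesis by blast
qed

end

lemma pstab_image:
  fixes G (structure)
  assumes "group_action G E \<phi>" and S: "S \<subseteq> E" and g: "g \<in> carrier G"
  shows "pstab G \<phi> (\<phi> g ` S) = conjg G g (pstab G \<phi> S)"
proof -
  interpret group_action G E \<phi> by fact
  interpret group G using group_hom group_hom.axioms(1) by blast
  have fix_iff: "\<phi> h (\<phi> g x) = \<phi> g x \<longleftrightarrow> \<phi> (inv g \<otimes> h \<otimes> g) x = x"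
    if h: "h \<in> carrier G" and x: "x \<in> S" for h x
  proof -
    have xE: "x \<in> E" using S x by blast
    have gx: "\<phi> g x \<in> E" using element_image[OF g xE refl] .
    have hgx: "\<phi> h (\<phi> g x) \<in> E" using element_image[OF h gx refl] .
    have "\<phi> (inv g \<otimes> h \<otimes> g) x = \<phi> (inv g) (\<phi> h (\<phi> g x))"
      using composition_rule[OF xE _ g, of "inv g \<otimes> h"] composition_rule[OF gx _ h, of "inv g"] g h
      by simp
    moreover have "\<phi> g (\<phi> (inv g) (\<phi> h (\<phi> g x))) = \<phi> h (\<phi> g x)"
      using orbit_sym_aux[OF inv_closed[OF g] hgx refl] g by simp
    ultimately show ?thesis using orbit_sym_aux[OF g xE refl] by metis
  qed
  have conj_eq: "h = g \<otimes> (inv g \<otimes> h \<otimes> g) \<otimes> inv g" if "h \<in> carrier G" for h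
    using that g by (simp add: m_assoc) (simp add: m_assoc [symmetric])
  show ?thesis
  proof
    show "pstab G \<phi> (\<phi> g ` S) \<subseteq> conjg G g (pstab G \<phi> S)"
    proof
      fix h assume "h \<in> pstab G \<phi> (\<phi> g ` S)"
      then have "h \<in> carrier G" "inv g \<otimes> h \<otimes> g \<in> pstab G \<phi> S"
        using fix_iff g unfolding pstab_def by auto
      then show "h \<in> conjg G g (pstab G \<phi> S)"
        using conj_eq conjg_mem[OF g] by metis
    qed
    show "conjg G g (pstab G \<phi> S) \<subseteq> pstab G \<phi> (\<phi> g ` S)"
    proof
      fix h assume "h \<in> conjg G g (pstab G \<phi> S)"
      then obtain k where k: "k \<in> pstab G \<phi> S" and h: "h = g \<otimes> k \<otimes> inv g"
        unfolding conjg_def by blast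
      have "k \<in> carrier G" using k unfolding pstab_def by blast
      then have "inv g \<otimes> h \<otimes> g = k" "h \<in> carrier G"
        using g h by (simp_all add: m_assoc) (simp add: m_assoc [symmetric])
      then show "h \<in> pstab G \<phi> (\<phi> g ` S)"
        using fix_iff k unfolding pstab_def by auto
    qed
  qed
qed

definition edge_orbit_representatives ::
  "('g, 'b) monoid_scheme \<Rightarrow> ('v \<Rightarrow> 'v \<Rightarrow> bool) \<Rightarrow> ('g \<Rightarrow> 'v \<Rightarrow> 'v) \<Rightarrow> ('v \<times> 'v) set \<Rightarrow> bool" where
  "edge_orbit_representatives G Adj \<phi> F \<longleftrightarrow> finite F \<and> (\<forall>(a, b)\<in>F. Adj a b) \<and>
     (\<forall>u v. Adj u v \<longrightarrow> (\<exists>(a, b)\<in>F. \<exists>g\<in>carrier G. \<phi> g a = u \<and> \<phi> g b = v))"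

lemma edge_orbit_representatives_imp_finitely_many:
  "edge_orbit_representatives G Adj \<phi> F \<Longrightarrow> finitely_many_edge_orbits G Adj \<phi>"
  unfolding edge_orbit_representatives_def finitely_many_edge_orbits_def by blast

lemma graph_action_reflects_adj:
  fixes G :: "('g, 'b) monoid_scheme" (structure) and V :: "'v set"
  assumes act: "graph_action G V Adj \<phi>" and g: "g \<in> carrier G" and "a \<in> V" "b \<in> V"
    and "Adj (\<phi> g a) (\<phi> g b)"
  shows "Adj a b"
proof -
  interpret group_action G V \<phi> using act unfolding graph_action_def by blast
  interpret group G using group_hom group_hom.axioms(1) by blast
  have "Adj (\<phi> (inv g) (\<phi> g a)) (\<phi> (inv g) (\<phi> g b))"
    using act g assms(5) unfolding graph_action_def by simp
  then show ?thesis using orbit_sym_aux[OF g] assms(3,4) by simp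
qed

text \<open>An edge at the vertex \<open>c\<close> is moved off \<open>c\<close> by \<open>g0\<close>, unless it is the edge joining \<open>c\<close>
  and \<open>\<phi> (inv g0) c\<close>.\<close>
lemma edge_orbit_representatives_from_cover_off_vertex:
  fixes G :: "('g, 'b) monoid_scheme" (structure) and V :: "'v set" and \<phi> :: "'g \<Rightarrow> 'v \<Rightarrow> 'v"
  assumes graph: "simple_graph V Adj" and act: "graph_action G V Adj \<phi>"
    and F1: "finite F1" "\<forall>(a, b)\<in>F1. Adj a b"
    and cover: "\<And>u v. Adj u v \<Longrightarrow> u \<noteq> c \<Longrightarrow> v \<noteq> c \<Longrightarrow> \<exists>(a, b)\<in>F1. \<exists>g\<in>carrier G. \<phi> g a = u \<and> \<phi> g b = v"
    and c: "c \<in> V" and g0: "g0 \<in> carrier G" "\<phi> g0 c \<noteq> c"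
  shows "\<exists>F. edge_orbit_representatives G Adj \<phi> F"
proof -
  interpret group_action G V \<phi> using act unfolding graph_action_def by blast
  interpret group G using group_hom group_hom.axioms(1) by blast
  have adj_V: "Adj u v \<Longrightarrow> u \<in> V \<and> v \<in> V" and irrefl: "\<not> Adj u u" for u v
    using graph unfolding simple_graph_def by blast+
  define d where "d = \<phi> (inv g0) c"
  have act_eq_c: "\<phi> g0 x = c \<longleftrightarrow> x = d" if "x \<in> V" for x
    using orbit_sym_aux[OF g0(1) that refl] orbit_sym_aux[OF inv_closed[OF g0(1)] c refl] g0(1)
    unfolding d_def by auto
  define F where "F = F1 \<union> ({(c, d), (d, c)} \<inter> {(a, b). Adj a b})"
  have "\<exists>(a, b)\<in>F. \<exists>g\<in>carrier G. \<phi> g a = u \<and> \<phi> g b = v" if uv: "Adj u v" for u v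
  proof -
    have V: "u \<in> V" "v \<in> V" using adj_V[OF uv] by auto
    have "c \<noteq> d" "u \<noteq> v" using act_eq_c[OF c] g0(2) irrefl uv by auto
    then consider "u \<noteq> c" "v \<noteq> c" | "{u, v} = {c, d}" | "u \<noteq> d" "v \<noteq> d"
      by blast
    then show ?thesis
    proof cases
      case 1
      then show ?thesis using cover[OF uv] unfolding F_def by blast
    next
      case 2
      then have "(u, v) \<in> F" using uv unfolding F_def by (auto simp: doubleton_eq_iff)
      moreover have "\<phi> \<one> u = u" "\<phi> \<one> v = v" using id_eq_one V by (metis restrict_apply')+
      ultimately show ?thesis by force
    next
      case 3
      have "Adj (\<phi> g0 u) (\<phi> g0 v)" using act g0(1) uv unfolding graph_action_def by blast
      then obtain a b g where ab: "(a, b) \<in> F1" "g \<in> carrier G" "\<phi> g a = \<phi> g0 u" "\<phi> g b = \<phi> g0 v"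
        using cover 3 act_eq_c V by blast
      then have "a \<in> V" "b \<in> V" using F1(2) adj_V by auto
      then have "\<phi> (inv g0 \<otimes> g) a = u" "\<phi> (inv g0 \<otimes> g) b = v"
        using composition_rule[OF _ inv_closed[OF g0(1)] ab(2)] ab orbit_sym_aux[OF g0(1)] V by auto
      then show ?thesis using ab g0(1) unfolding F_def by blast
    qed
  qed
  moreover have "finite F" "\<forall>(a, b)\<in>F. Adj a b" using F1 unfolding F_def by auto
  ultimately show ?thesis unfolding edge_orbit_representatives_def by blast
qed

text \<open>The pairs witnessing \<open>finitely_many_edge_orbits\<close> need not be edges: for \<open>a \<notin> V\<close> the
  extensional action gives \<open>\<phi> g a = undefined\<close>, which may itself be a vertex. Only edges at the
  vertex \<open>undefined\<close> are affected, and a nontrivial action moves them off that vertex.\<close>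
lemma finitely_many_edge_orbits_representatives:
  fixes G :: "('g, 'b) monoid_scheme" (structure) and V :: "'v set" and \<phi> :: "'g \<Rightarrow> 'v \<Rightarrow> 'v"
  assumes graph: "simple_graph V Adj" and act: "graph_action G V Adj \<phi>"
    and orbits: "finitely_many_edge_orbits G Adj \<phi>" and nontrivial: "nontrivial_action G V \<phi>"
  shows "\<exists>F. edge_orbit_representatives G Adj \<phi> F"
proof -
  interpret group_action G V \<phi> using act unfolding graph_action_def by blast
  have adj_V: "Adj u v \<Longrightarrow> u \<in> V \<and> v \<in> V" for u v
    using graph unfolding simple_graph_def by blast
  obtain F0 where "finite F0"
    and F0: "\<And>u v. Adj u v \<Longrightarrow> \<exists>(a, b)\<in>F0. \<exists>g\<in>carrier G. \<phi> g a = u \<and> \<phi> g b = v"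
    using orbits unfolding finitely_many_edge_orbits_def by blast
  define F1 where "F1 = {(a, b) \<in> F0. Adj a b}"
  have F1: "finite F1" "\<forall>(a, b)\<in>F1. Adj a b"
    using \<open>finite F0\<close> rev_finite_subset[of F0 F1] unfolding F1_def by auto
  have cover: "\<exists>(a, b)\<in>F1. \<exists>g\<in>carrier G. \<phi> g a = u \<and> \<phi> g b = v"
    if uv: "Adj u v" "u \<noteq> undefined" "v \<noteq> undefined" for u v
  proof -
    obtain a b g where ab: "(a, b) \<in> F0" "g \<in> carrier G" "\<phi> g a = u" "\<phi> g b = v"
      using F0[OF uv(1)] by blast
    have "a \<in> V" "b \<in> V"
      using ab uv extensional_arb[OF Bij_imp_extensional[OF bij_prop0[OF ab(2)]]] by metis+
    then have "Adj a b" using graph_action_reflects_adj[OF act ab(2)] ab(3,4) uv(1) by blast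
    then show ?thesis using ab unfolding F1_def by blast
  qed
  show ?thesis
  proof (cases "undefined \<in> V")
    case False
    then have "\<exists>(a, b)\<in>F1. \<exists>g\<in>carrier G. \<phi> g a = u \<and> \<phi> g b = v" if "Adj u v" for u v
      using cover[OF that] adj_V[OF that] by blast
    then show ?thesis using F1 unfolding edge_orbit_representatives_def by blast
  next
    case True
    then obtain g0 where "g0 \<in> carrier G" "\<phi> g0 undefined \<noteq> undefined"
      using nontrivial unfolding nontrivial_action_def by blast
    then show ?thesis
      using edge_orbit_representatives_from_cover_off_vertex[OF graph act F1 cover True] by blast
  qed
qed

section \<open>Almost malnormal families of subgroups\<close>

definition card_le :: "nat \<Rightarrow> 'a set \<Rightarrow> bool" where
  "card_le C K \<longleftrightarrow> finite K \<and> card K \<le> C"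

lemma card_le_subset: "card_le C B \<Longrightarrow> A \<subseteq> B \<Longrightarrow> card_le C A"
  unfolding card_le_def by (meson card_mono dual_order.trans rev_finite_subset)

lemma (in group) card_le_conjg:
  "g \<in> carrier G \<Longrightarrow> H \<subseteq> carrier G \<Longrightarrow> card_le C (conjg G g H) \<longleftrightarrow> card_le C H"
  unfolding card_le_def using conjg_finite_card by simp

definition conjugates :: "('g, 'b) monoid_scheme \<Rightarrow> 'g set set \<Rightarrow> 'g set set" where
  "conjugates G \<P> = {conjg G h P | h P. h \<in> carrier G \<and> P \<in> \<P>}"

lemma parabolic_iff_conjugates: "parabolic G \<P> H \<longleftrightarrow> (\<exists>Q\<in>conjugates G \<P>. H \<subseteq> Q)"
  unfolding parabolic_def conjugates_def by blast

lemma parabolic_subset: "parabolic G \<P> K \<Longrightarrow> H \<subseteq> K \<Longrightarrow> parabolic G \<P> H"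
  unfolding parabolic_def by blast

locale almost_malnormal_family = group G for G (structure) +
  fixes \<P> :: "'a set set" and C :: nat
  assumes subgroup_peripheral: "P \<in> \<P> \<Longrightarrow> subgroup P G"
    and infinite_peripheral: "P \<in> \<P> \<Longrightarrow> infinite P"
    and peripheral_proper: "P \<in> \<P> \<Longrightarrow> P \<noteq> carrier G"
    and almost_malnormal: "almost_malnormal G \<P> C"
begin

lemma peripheral_subset_carrier: "P \<in> \<P> \<Longrightarrow> P \<subseteq> carrier G"
  using subgroup_peripheral subgroup.subset by blast

lemma conjugatesE:
  assumes "Q \<in> conjugates G \<P>"
  obtains h P where "h \<in> carrier G" "P \<in> \<P>" "Q = conjg G h P"
  using assms unfolding conjugates_def by blast

lemma conjugates_subset_carrier: "Q \<in> conjugates G \<P> \<Longrightarrow> Q \<subseteq> carrier G"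
  by (metis conjugatesE conjg_subset_carrier peripheral_subset_carrier)

lemma conjugates_infinite: "Q \<in> conjugates G \<P> \<Longrightarrow> infinite Q"
  by (metis conjugatesE conjg_finite_card(1) peripheral_subset_carrier infinite_peripheral)

lemma conjugates_proper: "Q \<in> conjugates G \<P> \<Longrightarrow> Q \<noteq> carrier G"
  by (metis conjugatesE conjg_inv_conjg conjg_carrier inv_closed peripheral_subset_carrier
      peripheral_proper)

lemma conjg_conjugates:
  assumes Q: "Q \<in> conjugates G \<P>" and g: "g \<in> carrier G"
  shows "conjg G g Q \<in> conjugates G \<P>"
proof -
  from Q obtain h P where "h \<in> carrier G" "P \<in> \<P>" "Q = conjg G h P" by (rule conjugatesE)
  then have "conjg G g Q = conjg G (g \<otimes> h) P" "g \<otimes> h \<in> carrier G"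
    using conjg_mult[OF g] peripheral_subset_carrier g by simp_all
  with \<open>P \<in> \<P>\<close> show ?thesis unfolding conjugates_def by blast
qed

lemma large_Int_conjg:
  assumes P1: "P1 \<in> \<P>" and P2: "P2 \<in> \<P>" and h1: "h1 \<in> carrier G" and h2: "h2 \<in> carrier G"
    and large: "\<not> card_le C (conjg G h1 P1 \<inter> conjg G h2 P2)"
  shows "P1 = P2" and "inv h1 \<otimes> h2 \<in> P1"
proof -
  have P1c: "P1 \<subseteq> carrier G" and P2c: "P2 \<subseteq> carrier G"
    using P1 P2 peripheral_subset_carrier by auto
  have c1: "conjg G h1 P1 \<subseteq> carrier G" and c2: "conjg G h2 P2 \<subseteq> carrier G"
    using conjg_subset_carrier h1 h2 P1c P2c by auto
  have "conjg G (inv h1) (conjg G h1 P1 \<inter> conjg G h2 P2) = P1 \<inter> conjg G (inv h1 \<otimes> h2) P2"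
    using conjg_Int[OF inv_closed[OF h1] c1 c2] conjg_inv_conjg[OF h1 P1c]
      conjg_mult[OF inv_closed[OF h1] h2 P2c] by simp
  then have "\<not> card_le C (P1 \<inter> conjg G (inv h1 \<otimes> h2) P2)"
    using card_le_conjg[OF inv_closed[OF h1], of "conjg G h1 P1 \<inter> conjg G h2 P2"] large c1 by auto
  moreover have "inv h1 \<otimes> h2 \<in> carrier G" using h1 h2 by simp
  ultimately have "P1 = P2 \<and> inv h1 \<otimes> h2 \<in> P1"
    using almost_malnormal P1 P2 unfolding almost_malnormal_def card_le_def by blast
  then show "P1 = P2" "inv h1 \<otimes> h2 \<in> P1" by blast+
qed

lemma conjugates_eq_if_large_Int:
  assumes Q1: "Q1 \<in> conjugates G \<P>" and Q2: "Q2 \<in> conjugates G \<P>"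
    and large: "\<not> card_le C (Q1 \<inter> Q2)"
  shows "Q1 = Q2"
proof -
  obtain h1 P1 where 1: "h1 \<in> carrier G" "P1 \<in> \<P>" "Q1 = conjg G h1 P1"
    using Q1 by (rule conjugatesE)
  obtain h2 P2 where 2: "h2 \<in> carrier G" "P2 \<in> \<P>" "Q2 = conjg G h2 P2"
    using Q2 by (rule conjugatesE)
  have "P2 = P1" and k: "inv h1 \<otimes> h2 \<in> P1"
    using large_Int_conjg[OF 1(2) 2(2) 1(1) 2(1)] large 1(3) 2(3) by auto
  have "h2 = h1 \<otimes> (inv h1 \<otimes> h2)" using 1(1) 2(1) by (simp add: m_assoc [symmetric])
  then have "Q2 = conjg G h1 (conjg G (inv h1 \<otimes> h2) P1)"
    using conjg_mult[OF 1(1) _ peripheral_subset_carrier[OF 1(2)]] 1(1) 2 \<open>P2 = P1\<close> by (metis m_closed inv_closed)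
  also have "\<dots> = Q1" using conjg_subgroup_self[OF subgroup_peripheral[OF 1(2)] k] 1(3) by simp
  finally show ?thesis by simp
qed

lemma conjugates_self_normalizing:
  assumes Q: "Q \<in> conjugates G \<P>" and g: "g \<in> carrier G" and normalizes: "conjg G g Q = Q"
  shows "g \<in> Q"
proof -
  obtain h P where hP: "h \<in> carrier G" "P \<in> \<P>" "Q = conjg G h P" using Q by (rule conjugatesE)
  have gh: "g \<otimes> h \<in> carrier G" using g hP(1) by simp
  have "conjg G (g \<otimes> h) P = Q" using conjg_mult[OF g hP(1) peripheral_subset_carrier[OF hP(2)]] normalizes hP(3) by simp
  then have "\<not> card_le C (conjg G h P \<inter> conjg G (g \<otimes> h) P)"
    using conjugates_infinite[OF Q] hP(3) unfolding card_le_def by simp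
  then have "inv h \<otimes> (g \<otimes> h) \<in> P" using large_Int_conjg(2)[OF hP(2) hP(2) hP(1) gh] by blast
  moreover have "h \<otimes> (inv h \<otimes> (g \<otimes> h)) \<otimes> inv h = g"
    using g hP(1) by (simp add: m_assoc) (simp add: m_assoc [symmetric])
  ultimately show ?thesis using conjg_mem[OF hP(1)] hP(3) by metis
qed

end

section \<open>Cylinders\<close>

locale parabolic_splitting = almost_malnormal_family G \<P> C for G (structure) and \<P> C +
  fixes V :: "nat set" and Adj :: "nat \<Rightarrow> nat \<Rightarrow> bool" and \<phi> :: "'a \<Rightarrow> nat \<Rightarrow> nat"
  assumes splitting: "splitting G V Adj \<phi>"
    and nontrivial: "nontrivial_action G V \<phi>"
    and over_parabolic: "over_parabolic G \<P> Adj \<phi>"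
begin

lemma action: "group_action G V \<phi>"
  using splitting unfolding splitting_def graph_action_def by blast

lemma tree: "is_tree V Adj"
  using splitting unfolding splitting_def by blast

lemma adj_in_V: "Adj u v \<Longrightarrow> u \<in> V \<and> v \<in> V"
  and adj_irrefl: "\<not> Adj u u"
  and adj_sym: "Adj u v \<Longrightarrow> Adj v u"
  using tree unfolding is_tree_def simple_graph_def by blast+

lemma adj_act: "g \<in> carrier G \<Longrightarrow> Adj u v \<Longrightarrow> Adj (\<phi> g u) (\<phi> g v)"
  using splitting unfolding splitting_def graph_action_def by blast

lemma no_inversion: "g \<in> carrier G \<Longrightarrow> Adj u v \<Longrightarrow> \<not> (\<phi> g u = v \<and> \<phi> g v = u)"
  using splitting unfolding splitting_def without_inversions_def by blast

lemma act_in_V: "g \<in> carrier G \<Longrightarrow> x \<in> V \<Longrightarrow> \<phi> g x \<in> V"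
  using group_action.element_image[OF action] by blast

lemma act_mult: "g \<in> carrier G \<Longrightarrow> h \<in> carrier G \<Longrightarrow> x \<in> V \<Longrightarrow> \<phi> (g \<otimes> h) x = \<phi> g (\<phi> h x)"
  using group_action.composition_rule[OF action] by blast

lemma act_one: "x \<in> V \<Longrightarrow> \<phi> \<one> x = x"
  using group_action.id_eq_one[OF action] by (metis restrict_apply')

lemma act_inv_act: "g \<in> carrier G \<Longrightarrow> x \<in> V \<Longrightarrow> \<phi> (inv g) (\<phi> g x) = x"
  using group_action.orbit_sym_aux[OF action] by blast

definition edges :: "nat set set" where
  "edges = {{u, v} | u v. Adj u v}"

definition large_edge :: "nat set \<Rightarrow> bool" where
  "large_edge e \<longleftrightarrow> \<not> card_le C (pstab G \<phi> e)"

text \<open>By almost malnormality the conjugate of a peripheral subgroup containing the stabilizer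
  of a large edge is unique.\<close>
definition parabolic_of :: "nat set \<Rightarrow> 'a set" where
  "parabolic_of e = (SOME Q. Q \<in> conjugates G \<P> \<and> pstab G \<phi> e \<subseteq> Q)"

lemma edges_iff: "e \<in> edges \<longleftrightarrow> (\<exists>u v. Adj u v \<and> e = {u, v})"
  unfolding edges_def by blast

lemma edges_subset_V: "e \<in> edges \<Longrightarrow> e \<subseteq> V"
  unfolding edges_iff using adj_in_V by blast

lemma image_act_edges: "e \<in> edges \<Longrightarrow> g \<in> carrier G \<Longrightarrow> \<phi> g ` e \<in> edges"
  unfolding edges_iff using adj_act by fastforce

lemma image_act_inv: "e \<subseteq> V \<Longrightarrow> g \<in> carrier G \<Longrightarrow> \<phi> (inv g) ` \<phi> g ` e = e"
  unfolding image_image using act_inv_act by (simp add: subset_eq)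

lemma large_edge_image: "e \<subseteq> V \<Longrightarrow> g \<in> carrier G \<Longrightarrow> large_edge (\<phi> g ` e) \<longleftrightarrow> large_edge e"
  unfolding large_edge_def using pstab_image[OF action] card_le_conjg
  by (simp add: pstab_def subset_eq)

lemma parabolic_of: "e \<in> edges \<Longrightarrow> parabolic_of e \<in> conjugates G \<P> \<and> pstab G \<phi> e \<subseteq> parabolic_of e"
  unfolding parabolic_of_def
proof (rule someI_ex)
  assume "e \<in> edges"
  then have "parabolic G \<P> (pstab G \<phi> e)" using over_parabolic unfolding over_parabolic_def edges_iff by blast
  then show "\<exists>Q. Q \<in> conjugates G \<P> \<and> pstab G \<phi> e \<subseteq> Q" unfolding parabolic_iff_conjugates by blast
qed

lemma parabolic_of_unique:
  assumes "large_edge e" "Q \<in> conjugates G \<P>" "pstab G \<phi> e \<subseteq> Q" "e \<in> edges"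
  shows "parabolic_of e = Q"
proof (rule conjugates_eq_if_large_Int)
  show "\<not> card_le C (parabolic_of e \<inter> Q)"
    using assms parabolic_of card_le_subset unfolding large_edge_def by (metis le_inf_iff)
qed (use assms parabolic_of in blast)+

lemma parabolic_of_image:
  assumes e: "e \<in> edges" and "large_edge e" and g: "g \<in> carrier G"
  shows "parabolic_of (\<phi> g ` e) = conjg G g (parabolic_of e)"
proof (rule parabolic_of_unique)
  show "pstab G \<phi> (\<phi> g ` e) \<subseteq> conjg G g (parabolic_of e)"
    using pstab_image[OF action edges_subset_V[OF e] g] conjg_mono parabolic_of[OF e] by metis
qed (use assms parabolic_of conjg_conjugates large_edge_image edges_subset_V image_act_edges in auto)

definition cylinder_step :: "nat set \<Rightarrow> nat set \<Rightarrow> bool" where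
  "cylinder_step e e' \<longleftrightarrow> e \<in> edges \<and> e' \<in> edges \<and> e \<inter> e' \<noteq> {} \<and>
     (e = e' \<or> large_edge e \<and> large_edge e' \<and> parabolic_of e = parabolic_of e')"

definition cylinder :: "nat set \<Rightarrow> nat set set" where
  "cylinder e = {e'. cylinder_step\<^sup>*\<^sup>* e e'}"

definition cylinders :: "nat set set set" where
  "cylinders = cylinder ` edges"

definition translate :: "'a \<Rightarrow> nat set set \<Rightarrow> nat set set" where
  "translate g Y = image (\<phi> g) ` Y"

lemma cylinder_step_sym: "cylinder_step e e' \<Longrightarrow> cylinder_step e' e"
  unfolding cylinder_step_def by blast

lemma cylinder_steps_sym: "cylinder_step\<^sup>*\<^sup>* e e' \<Longrightarrow> cylinder_step\<^sup>*\<^sup>* e' e"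
  by (induction rule: rtranclp_induct) (auto intro: converse_rtranclp_into_rtranclp cylinder_step_sym)

lemma cylinder_steps_invariant:
  "cylinder_step\<^sup>*\<^sup>* e e' \<Longrightarrow> e \<in> edges \<Longrightarrow>
    e' \<in> edges \<and> (e' = e \<or> large_edge e \<and> large_edge e' \<and> parabolic_of e = parabolic_of e')"
  by (induction rule: rtranclp_induct) (auto simp: cylinder_step_def)

lemma cylinder_eq:
  assumes "cylinder_step\<^sup>*\<^sup>* e e'"
  shows "cylinder e = cylinder e'"
proof -
  have "cylinder_step\<^sup>*\<^sup>* e x \<longleftrightarrow> cylinder_step\<^sup>*\<^sup>* e' x" for x
    using assms cylinder_steps_sym[OF assms] by (meson rtranclp_trans)
  then show ?thesis unfolding cylinder_def by blast
qed

lemma mem_cylinder_self: "e \<in> cylinder e"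
  unfolding cylinder_def by simp

lemma cylinders_eq_cylinder: "Y \<in> cylinders \<Longrightarrow> e \<in> Y \<Longrightarrow> Y = cylinder e"
  unfolding cylinders_def using cylinder_eq unfolding cylinder_def by blast

lemma cylinders_disjoint: "Y \<in> cylinders \<Longrightarrow> Y' \<in> cylinders \<Longrightarrow> e \<in> Y \<Longrightarrow> e \<in> Y' \<Longrightarrow> Y = Y'"
  using cylinders_eq_cylinder by metis

lemma cylinders_subset_edges: "Y \<in> cylinders \<Longrightarrow> Y \<subseteq> edges"
  unfolding cylinders_def cylinder_def using cylinder_steps_invariant by blast

lemma cylinders_nonempty: "Y \<in> cylinders \<Longrightarrow> Y \<noteq> {}"
  unfolding cylinders_def using mem_cylinder_self by blast

lemma cylinder_small_edge: "e \<in> edges \<Longrightarrow> \<not> large_edge e \<Longrightarrow> cylinder e = {e}"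
  unfolding cylinder_def using cylinder_steps_invariant by auto

lemma cylinder_step_image:
  assumes step: "cylinder_step e e'" and g: "g \<in> carrier G"
  shows "cylinder_step (\<phi> g ` e) (\<phi> g ` e')"
proof -
  have E: "e \<in> edges" "e' \<in> edges" using step unfolding cylinder_step_def by auto
  have V: "e \<subseteq> V" "e' \<subseteq> V" using E edges_subset_V by auto
  have "e = e' \<or> large_edge e \<and> large_edge e' \<and> parabolic_of e = parabolic_of e'"
    using step unfolding cylinder_step_def by blast
  then have "\<phi> g ` e = \<phi> g ` e' \<or> large_edge (\<phi> g ` e) \<and> large_edge (\<phi> g ` e') \<and>
      parabolic_of (\<phi> g ` e) = parabolic_of (\<phi> g ` e')"
  proof
    assume "large_edge e \<and> large_edge e' \<and> parabolic_of e = parabolic_of e'"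
    then show ?thesis
      using parabolic_of_image[OF E(1) _ g] parabolic_of_image[OF E(2) _ g]
        large_edge_image[OF V(1) g] large_edge_image[OF V(2) g] by simp
  qed simp
  moreover have "\<phi> g ` e \<inter> \<phi> g ` e' \<noteq> {}" using step unfolding cylinder_step_def by blast
  ultimately show ?thesis unfolding cylinder_step_def using image_act_edges E g by blast
qed

lemma cylinder_steps_image:
  "cylinder_step\<^sup>*\<^sup>* e e' \<Longrightarrow> g \<in> carrier G \<Longrightarrow> cylinder_step\<^sup>*\<^sup>* (\<phi> g ` e) (\<phi> g ` e')"
  by (induction rule: rtranclp_induct) (auto intro: rtranclp.rtrancl_into_rtrancl cylinder_step_image)

lemma translate_cylinder:
  assumes e: "e \<in> edges" and g: "g \<in> carrier G"
  shows "translate g (cylinder e) = cylinder (\<phi> g ` e)"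
proof
  show "translate g (cylinder e) \<subseteq> cylinder (\<phi> g ` e)"
    unfolding translate_def cylinder_def using cylinder_steps_image g by blast
  show "cylinder (\<phi> g ` e) \<subseteq> translate g (cylinder e)"
  proof
    fix e' assume e': "e' \<in> cylinder (\<phi> g ` e)"
    then have "e' \<subseteq> V"
      using cylinder_steps_invariant image_act_edges[OF e g] edges_subset_V
      unfolding cylinder_def by blast
    have "cylinder_step\<^sup>*\<^sup>* (\<phi> (inv g) ` \<phi> g ` e) (\<phi> (inv g) ` e')"
      using cylinder_steps_image[OF _ inv_closed[OF g]] e' unfolding cylinder_def by blast
    then have "\<phi> (inv g) ` e' \<in> cylinder e"
      using image_act_inv[OF edges_subset_V[OF e] g] unfolding cylinder_def by simp
    moreover have "e' = \<phi> g ` \<phi> (inv g) ` e'"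
      using image_act_inv[OF \<open>e' \<subseteq> V\<close> inv_closed[OF g]] g by simp
    ultimately show "e' \<in> translate g (cylinder e)" unfolding translate_def by blast
  qed
qed

lemma translate_cylinders: "Y \<in> cylinders \<Longrightarrow> g \<in> carrier G \<Longrightarrow> translate g Y \<in> cylinders"
  unfolding cylinders_def using translate_cylinder image_act_edges by auto

lemma translate_mult:
  assumes "Y \<in> cylinders" "g \<in> carrier G" "h \<in> carrier G"
  shows "translate (g \<otimes> h) Y = translate g (translate h Y)"
  unfolding translate_def image_image
proof (rule image_cong[OF refl])
  fix e assume "e \<in> Y"
  then have "e \<subseteq> V" using assms(1) cylinders_subset_edges edges_subset_V by blast
  then show "\<phi> (g \<otimes> h) ` e = (\<lambda>x. \<phi> g (\<phi> h x)) ` e"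
    using act_mult assms(2,3) by (auto intro!: image_cong)
qed

lemma translate_one:
  assumes "Y \<in> cylinders"
  shows "translate \<one> Y = Y"
proof -
  have "\<phi> \<one> ` e = e" if "e \<in> Y" for e
  proof -
    have "e \<subseteq> V" using that assms cylinders_subset_edges edges_subset_V by blast
    then show ?thesis using act_one by (metis image_cong image_ident subsetD)
  qed
  then show ?thesis unfolding translate_def by simp
qed

text \<open>This is where almost malnormality enters: an element preserving the cylinder of a large
  edge normalizes the corresponding conjugate of a peripheral subgroup, hence lies in it.\<close>
lemma stabilizer_cylinder:
  assumes e: "e \<in> edges" and g: "g \<in> carrier G" and fixes_cylinder: "translate g (cylinder e) = cylinder e"
  shows "if large_edge e then g \<in> parabolic_of e else g \<in> pstab G \<phi> e"
proof (cases "large_edge e")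
  case True
  have "\<phi> g ` e \<in> cylinder e" using fixes_cylinder mem_cylinder_self unfolding translate_def by blast
  then have "parabolic_of (\<phi> g ` e) = parabolic_of e"
    using cylinder_steps_invariant[of e "\<phi> g ` e"] e unfolding cylinder_def by auto
  then have "conjg G g (parabolic_of e) = parabolic_of e" using parabolic_of_image[OF e True g] by simp
  then show ?thesis using True conjugates_self_normalizing parabolic_of[OF e] g by simp
next
  case False
  then have img: "\<phi> g ` e = e" using fixes_cylinder cylinder_small_edge[OF e] unfolding translate_def by simp
  obtain u v where uv: "Adj u v" "e = {u, v}" using e edges_iff by blast
  have "\<phi> g u \<noteq> \<phi> g v"
    using group_action.inj_prop[OF action g] adj_in_V[OF uv(1)] adj_irrefl uv(1) by (metis inj_on_eq_iff)
  then have "\<phi> g u = u \<and> \<phi> g v = v"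
    using img no_inversion[OF g uv(1)] uv(2) by (auto simp: doubleton_eq_iff)
  then show ?thesis using False g uv(2) unfolding pstab_def by simp
qed

lemma stabilizer_cylinders:
  assumes Y: "Y \<in> cylinders" and e: "e \<in> Y"
  shows "{g \<in> carrier G. translate g Y = Y} \<subseteq> (if large_edge e then parabolic_of e else pstab G \<phi> e)"
proof
  fix g assume g: "g \<in> {g \<in> carrier G. translate g Y = Y}"
  have "Y = cylinder e" "e \<in> edges" using cylinders_eq_cylinder[OF Y e] cylinders_subset_edges[OF Y] e by auto
  then show "g \<in> (if large_edge e then parabolic_of e else pstab G \<phi> e)"
    using stabilizer_cylinder[of e g] g by simp
qed

lemma parabolic_stabilizer_cylinders:
  assumes "Y \<in> cylinders"
  shows "parabolic G \<P> {g \<in> carrier G. translate g Y = Y}"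
proof -
  obtain e where e: "e \<in> Y" using cylinders_nonempty[OF assms] by blast
  then have "e \<in> edges" using cylinders_subset_edges[OF assms] by blast
  then have "parabolic G \<P> (if large_edge e then parabolic_of e else pstab G \<phi> e)"
    using parabolic_of[of e] over_parabolic unfolding over_parabolic_def edges_iff
    by (auto simp: parabolic_iff_conjugates)
  then show ?thesis using stabilizer_cylinders[OF assms e] parabolic_subset by blast
qed

text \<open>Large edges in distinct cylinders through a common vertex have their stabilizers in distinct
  conjugates of peripheral subgroups, which intersect in at most \<open>C\<close> elements.\<close>
lemma card_le_stabilizer_two_cylinders:
  assumes Y: "Y \<in> cylinders" "e \<in> Y" "v \<in> e" and Y': "Y' \<in> cylinders" "e' \<in> Y'" "v \<in> e'"
    and "Y \<noteq> Y'"
  shows "card_le C {g \<in> carrier G. translate g Y = Y \<and> translate g Y' = Y'}"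
    (is "card_le C ?K")
proof -
  have E: "e \<in> edges" "e' \<in> edges" using Y Y' cylinders_subset_edges by blast+
  have K: "?K \<subseteq> (if large_edge e then parabolic_of e else pstab G \<phi> e)"
    "?K \<subseteq> (if large_edge e' then parabolic_of e' else pstab G \<phi> e')"
    using stabilizer_cylinders[OF Y(1,2)] stabilizer_cylinders[OF Y'(1,2)] by blast+
  consider "\<not> large_edge e" | "\<not> large_edge e'" | "large_edge e" "large_edge e'" by blast
  then show ?thesis
  proof cases
    case 3
    have "parabolic_of e \<noteq> parabolic_of e'"
    proof
      assume "parabolic_of e = parabolic_of e'"
      then have "cylinder_step e e'" unfolding cylinder_step_def using E Y(3) Y'(3) 3 by blast
      then have "cylinder e = cylinder e'" by (simp add: cylinder_eq r_into_rtranclp)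
      then show False using cylinders_eq_cylinder Y Y' \<open>Y \<noteq> Y'\<close> by blast
    qed
    then have "card_le C (parabolic_of e \<inter> parabolic_of e')"
      using conjugates_eq_if_large_Int parabolic_of E by blast
    moreover have "?K \<subseteq> parabolic_of e \<inter> parabolic_of e'" using K 3 by simp
    ultimately show ?thesis using card_le_subset by blast
  qed (use K card_le_subset in \<open>auto simp: large_edge_def\<close>)
qed

end

section \<open>The tree of cylinders\<close>

context parabolic_splitting
begin

definition incident :: "nat \<Rightarrow> nat set set \<Rightarrow> bool" where
  "incident v Y \<longleftrightarrow> v \<in> V \<and> Y \<in> cylinders \<and> (\<exists>e\<in>Y. v \<in> e)"

definition cyl_tree_vertices :: "(nat + nat set set) set" where
  "cyl_tree_vertices = Inl ` V \<union> Inr ` cylinders"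

definition cyl_tree_adj :: "nat + nat set set \<Rightarrow> nat + nat set set \<Rightarrow> bool" where
  "cyl_tree_adj x y \<longleftrightarrow> (\<exists>v Y. incident v Y \<and> (x = Inl v \<and> y = Inr Y \<or> x = Inr Y \<and> y = Inl v))"

definition cyl_tree_action :: "'a \<Rightarrow> nat + nat set set \<Rightarrow> nat + nat set set" where
  "cyl_tree_action g x =
     (if x \<in> cyl_tree_vertices then case_sum (Inl \<circ> \<phi> g) (Inr \<circ> translate g) x else undefined)"

lemma cyl_tree_action_Inl: "v \<in> V \<Longrightarrow> cyl_tree_action g (Inl v) = Inl (\<phi> g v)"
  unfolding cyl_tree_action_def cyl_tree_vertices_def by simp

lemma cyl_tree_action_Inr: "Y \<in> cylinders \<Longrightarrow> cyl_tree_action g (Inr Y) = Inr (translate g Y)"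
  unfolding cyl_tree_action_def cyl_tree_vertices_def by simp

lemma incident_translate: "incident v Y \<Longrightarrow> g \<in> carrier G \<Longrightarrow> incident (\<phi> g v) (translate g Y)"
  unfolding incident_def using act_in_V translate_cylinders unfolding translate_def by blast

lemma cyl_tree_adj_Inl: "cyl_tree_adj (Inl v) z \<longleftrightarrow> (\<exists>Y. z = Inr Y \<and> incident v Y)"
  and cyl_tree_adj_Inr: "cyl_tree_adj (Inr Y) z \<longleftrightarrow> (\<exists>v. z = Inl v \<and> incident v Y)"
  unfolding cyl_tree_adj_def by blast+

lemma cyl_tree_adj_sym: "cyl_tree_adj x y \<Longrightarrow> cyl_tree_adj y x"
  unfolding cyl_tree_adj_def by blast

lemma incident_edge:
  assumes "Adj u v"
  shows "incident u (cylinder {u, v}) \<and> incident v (cylinder {u, v})"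
proof -
  have "{u, v} \<in> edges" using assms edges_iff by blast
  then show ?thesis
    using mem_cylinder_self[of "{u, v}"] adj_in_V[OF assms] unfolding incident_def cylinders_def by blast
qed

lemma simple_graph_cyl_tree: "simple_graph cyl_tree_vertices cyl_tree_adj"
  unfolding simple_graph_def cyl_tree_adj_def cyl_tree_vertices_def incident_def by blast

lemma cyl_tree_steps_Inl:
  assumes "Adj\<^sup>*\<^sup>* u v"
  shows "cyl_tree_adj\<^sup>*\<^sup>* (Inl u) (Inl v)"
  using assms
proof (induction rule: rtranclp_induct)
  case (step v w)
  then have "cyl_tree_adj (Inl v) (Inr (cylinder {v, w}))" "cyl_tree_adj (Inr (cylinder {v, w})) (Inl w)"
    using incident_edge unfolding cyl_tree_adj_def by blast+
  with step.IH show ?case by (meson rtranclp.rtrancl_into_rtrancl)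
qed simp

lemma connected_cyl_tree: "graph_connected cyl_tree_vertices cyl_tree_adj"
proof -
  have near_V: "\<exists>u\<in>V. cyl_tree_adj\<^sup>*\<^sup>* (Inl u) x" if "x \<in> cyl_tree_vertices" for x
  proof (cases x)
    case (Inl v)
    then have "v \<in> V" using that unfolding cyl_tree_vertices_def by auto
    then show ?thesis using Inl by (intro bexI[of _ v]) simp_all
  next
    case (Inr Y)
    then have Y: "Y \<in> cylinders" using that unfolding cyl_tree_vertices_def by auto
    then obtain e where e: "e \<in> Y" using cylinders_nonempty by blast
    then have "e \<in> edges" using Y cylinders_subset_edges by blast
    then obtain a b where ab: "Adj a b" "e = {a, b}" unfolding edges_iff by blast
    then have "incident a Y" unfolding incident_def using Y adj_in_V[OF ab(1)] e by blast
    then have "cyl_tree_adj (Inl a) (Inr Y)" unfolding cyl_tree_adj_def by blast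
    then show ?thesis using adj_in_V[OF ab(1)] Inr by (intro bexI[of _ a]) (simp_all add: r_into_rtranclp)
  qed
  have sym: "cyl_tree_adj\<^sup>*\<^sup>* x y \<Longrightarrow> cyl_tree_adj\<^sup>*\<^sup>* y x" for x y
    using symp_rtranclp[of cyl_tree_adj] cyl_tree_adj_sym by (simp add: symp_def)
  show ?thesis unfolding graph_connected_iff_rtranclp
  proof (intro ballI)
    fix x y assume "x \<in> cyl_tree_vertices" "y \<in> cyl_tree_vertices"
    then obtain u v where uv: "u \<in> V" "v \<in> V" and "cyl_tree_adj\<^sup>*\<^sup>* (Inl u) x" "cyl_tree_adj\<^sup>*\<^sup>* (Inl v) y"
      using near_V by blast
    moreover have "cyl_tree_adj\<^sup>*\<^sup>* (Inl u) (Inl v)"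
      using cyl_tree_steps_Inl tree uv unfolding is_tree_def graph_connected_iff_rtranclp by blast
    ultimately show "cyl_tree_adj\<^sup>*\<^sup>* x y" using sym rtranclp_trans by metis
  qed
qed

lemma cylinder_edge_path:
  assumes "e \<in> edges" "e \<in> S" "x \<in> e" "z \<in> e"
  shows "(\<lambda>u v. Adj u v \<and> {u, v} \<in> S)\<^sup>*\<^sup>* x z"
proof (cases "x = z")
  case False
  obtain p q where "Adj p q" "e = {p, q}" using assms(1) edges_iff by blast
  then have "Adj x z \<and> {x, z} \<in> S" using assms False adj_sym by (auto simp: insert_commute)
  then show ?thesis by (simp add: r_into_rtranclp)
qed simp

lemma cylinder_connected:
  assumes "incident x Y" "incident z Y"
  shows "(\<lambda>u v. Adj u v \<and> {u, v} \<in> Y)\<^sup>*\<^sup>* x z"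
proof -
  obtain e1 where e1: "e1 \<in> Y" "x \<in> e1" and Y: "Y \<in> cylinders" using assms(1) unfolding incident_def by blast
  obtain e2 where e2: "e2 \<in> Y" "z \<in> e2" using assms(2) unfolding incident_def by blast
  have "Y = cylinder e1" using cylinders_eq_cylinder Y e1 by blast
  have "cylinder_step\<^sup>*\<^sup>* e1 e2" using e2 \<open>Y = cylinder e1\<close> unfolding cylinder_def by blast
  then show ?thesis
    using e2(2)
  proof (induction arbitrary: z rule: rtranclp_induct)
    case base
    then show ?case using cylinder_edge_path e1 Y cylinders_subset_edges by blast
  next
    case (step e e')
    obtain w where w: "w \<in> e" "w \<in> e'" using step.hyps(2) unfolding cylinder_step_def by blast
    have "cylinder_step\<^sup>*\<^sup>* e1 e'" using step.hyps by (rule rtranclp.rtrancl_into_rtrancl)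
    then have "e' \<in> Y" using \<open>Y = cylinder e1\<close> unfolding cylinder_def by blast
    have "e' \<in> edges" using step.hyps(2) unfolding cylinder_step_def by blast
    have "(\<lambda>u v. Adj u v \<and> {u, v} \<in> Y)\<^sup>*\<^sup>* w z"
      using cylinder_edge_path[OF \<open>e' \<in> edges\<close> \<open>e' \<in> Y\<close> w(2) step.prems] .
    with step.IH[OF w(1)] show ?case by (rule rtranclp_trans)
  qed
qed

fun underlying :: "nat + nat set set \<Rightarrow> nat set" where
  "underlying (Inl x) = {x}"
| "underlying (Inr Y) = {v. incident v Y}"

lemma underlying_path_avoiding:
  assumes Y: "Y \<in> cylinders" and "n \<noteq> Inr Y" "x \<in> underlying n" "z \<in> underlying n"
  shows "(\<lambda>u v. Adj u v \<and> {u, v} \<notin> Y)\<^sup>*\<^sup>* x z"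
proof (cases n)
  case (Inr Y')
  then have "incident x Y'" "incident z Y'" "Y' \<noteq> Y" using assms by auto
  then have "Y' \<in> cylinders" "(\<lambda>u v. Adj u v \<and> {u, v} \<in> Y')\<^sup>*\<^sup>* x z"
    using cylinder_connected unfolding incident_def by blast+
  then show ?thesis
    using cylinders_disjoint[OF Y] \<open>Y' \<noteq> Y\<close> by (auto elim!: rtranclp_mono[THEN predicate2D, rotated])
qed (use assms in simp)

lemma walk_avoiding_cylinder_projects:
  assumes Y: "Y \<in> cylinders"
  shows "gwalk cyl_tree_adj ws \<Longrightarrow> Inr Y \<notin> set ws \<Longrightarrow> x \<in> underlying (hd ws) \<Longrightarrow>
    z \<in> underlying (last ws) \<Longrightarrow> (\<lambda>u v. Adj u v \<and> {u, v} \<notin> Y)\<^sup>*\<^sup>* x z"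
proof (induction ws arbitrary: x)
  case (Cons n ws)
  show ?case
  proof (cases "ws = []")
    case True
    then show ?thesis using underlying_path_avoiding[OF Y, of n x z] Cons.prems(2-4) by simp
  next
    case False
    have "cyl_tree_adj n (hd ws)" using Cons.prems(1) False by (cases ws) auto
    then obtain w where w: "w \<in> underlying n" "w \<in> underlying (hd ws)"
      by (cases n) (auto simp: cyl_tree_adj_Inl cyl_tree_adj_Inr)
    have "n \<noteq> Inr Y" using Cons.prems(2) by auto
    then have "(\<lambda>u v. Adj u v \<and> {u, v} \<notin> Y)\<^sup>*\<^sup>* x w"
      using underlying_path_avoiding[OF Y _ _ w(1)] Cons.prems(3) by simp
    moreover have "(\<lambda>u v. Adj u v \<and> {u, v} \<notin> Y)\<^sup>*\<^sup>* w z"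
      using Cons.IH[OF gwalk_ConsD[OF Cons.prems(1) False] _ w(2)] Cons.prems(2,4) False by simp
    ultimately show ?thesis by (rule rtranclp_trans)
  qed
qed simp

text \<open>A circuit may be rotated to start at \<open>Inl a\<close>, followed by \<open>Inr Y\<close> and \<open>Inl b\<close>. Then \<open>a\<close> and
  \<open>b\<close> are joined inside the cylinder \<open>Y\<close> and, by projecting the rest of the circuit, also by
  a path avoiding \<open>Y\<close>; in a tree this is impossible.\<close>
lemma acyclic_cyl_tree: "\<not> (\<exists>c. cycle_list cyl_tree_adj c)"
proof
  assume "\<exists>c. cycle_list cyl_tree_adj c"
  then obtain c0 where c0: "cycle_list cyl_tree_adj c0" by blast
  have "\<exists>c a. cycle_list cyl_tree_adj c \<and> hd c = Inl a"
  proof (cases "hd c0")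
    case (Inr Y)
    obtain x xs where c0x: "c0 = x # xs" using c0 unfolding cycle_list_def by (cases c0) auto
    with c0 have "xs \<noteq> []" unfolding cycle_list_def by auto
    then have "cyl_tree_adj x (hd xs)" using c0 c0x unfolding cycle_list_def by (cases xs) auto
    then have "\<exists>a. hd xs = Inl a" using Inr c0x cyl_tree_adj_Inr by auto
    moreover have "hd (rotate1 c0) = hd xs" using c0x \<open>xs \<noteq> []\<close> by (cases xs) auto
    ultimately show ?thesis using cycle_list_rotate1[OF c0] by metis
  qed (use c0 in blast)
  then obtain c a where "cycle_list cyl_tree_adj c" "hd c = Inl a" by blast
  moreover from this have "3 \<le> length c" unfolding cycle_list_def by blast
  ultimately obtain y z rest where "cycle_list cyl_tree_adj (Inl a # y # z # rest)"
    by (cases c; cases "tl c"; cases "tl (tl c)") (auto simp: numeral_3_eq_3)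
  then have walk: "gwalk cyl_tree_adj (Inl a # y # z # rest)" and dist: "distinct (Inl a # y # z # rest)"
    and closing: "cyl_tree_adj (last (z # rest)) (Inl a)"
    unfolding cycle_list_def by auto
  obtain Y b where Y: "y = Inr Y" "incident a Y" and b: "z = Inl b" "incident b Y"
    using walk by (auto simp: cyl_tree_adj_Inl cyl_tree_adj_Inr)
  have "Y \<in> cylinders" using Y unfolding incident_def by blast
  have "gwalk cyl_tree_adj ((Inl b # rest) @ [Inl a])"
    using gwalk_snoc[of cyl_tree_adj "Inl b # rest"] walk closing b by simp
  moreover have "Inr Y \<notin> set ((Inl b # rest) @ [Inl a])" using dist Y b by auto
  ultimately have outside: "(\<lambda>u v. Adj u v \<and> {u, v} \<notin> Y)\<^sup>*\<^sup>* b a"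
    using walk_avoiding_cylinder_projects[OF \<open>Y \<in> cylinders\<close>, of "(Inl b # rest) @ [Inl a]" b a] by simp
  have inside: "(\<lambda>u v. Adj u v \<and> {u, v} \<in> Y)\<^sup>*\<^sup>* a b" using cylinder_connected Y b by blast
  have "a \<noteq> b" using dist b by auto
  show False
  proof (rule acyclic_no_complementary_paths[OF _ adj_irrefl _ inside outside \<open>a \<noteq> b\<close>])
    show "\<not> (\<exists>c. cycle_list Adj c)" using tree unfolding is_tree_def by blast
  qed (simp add: insert_commute)
qed

lemma tree_cyl_tree: "is_tree cyl_tree_vertices cyl_tree_adj"
  unfolding is_tree_def
  using simple_graph_cyl_tree connected_cyl_tree acyclic_cyl_tree tree
  unfolding is_tree_def cyl_tree_vertices_def by blast

end

context parabolic_splitting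
begin

lemma group_action_cyl_tree: "group_action G cyl_tree_vertices cyl_tree_action"
proof (rule group_actionI)
  show "cyl_tree_action g \<in> extensional cyl_tree_vertices" for g
    unfolding cyl_tree_action_def extensional_def by simp
  show "cyl_tree_action g x \<in> cyl_tree_vertices" if "g \<in> carrier G" "x \<in> cyl_tree_vertices" for g x
    using that act_in_V translate_cylinders unfolding cyl_tree_vertices_def
    by (auto simp: cyl_tree_action_Inl cyl_tree_action_Inr)
  show "cyl_tree_action \<one> x = x" if "x \<in> cyl_tree_vertices" for x
    using that act_one translate_one unfolding cyl_tree_vertices_def
    by (auto simp: cyl_tree_action_Inl cyl_tree_action_Inr)
  show "cyl_tree_action (g \<otimes> h) x = cyl_tree_action g (cyl_tree_action h x)"
    if "g \<in> carrier G" "h \<in> carrier G" "x \<in> cyl_tree_vertices" for g h x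
    using that act_in_V translate_cylinders act_mult translate_mult unfolding cyl_tree_vertices_def
    by (auto simp: cyl_tree_action_Inl cyl_tree_action_Inr)
qed (rule is_group)

lemma cyl_tree_adj_action:
  assumes g: "g \<in> carrier G" and "cyl_tree_adj x y"
  shows "cyl_tree_adj (cyl_tree_action g x) (cyl_tree_action g y)"
proof -
  obtain v Y where i: "incident v Y" and xy: "x = Inl v \<and> y = Inr Y \<or> x = Inr Y \<and> y = Inl v"
    using assms(2) unfolding cyl_tree_adj_def by blast
  have "v \<in> V" "Y \<in> cylinders" using i unfolding incident_def by auto
  then show ?thesis
    using xy incident_translate[OF i g] unfolding cyl_tree_adj_def
    by (auto simp: cyl_tree_action_Inl cyl_tree_action_Inr)
qed

lemma graph_action_cyl_tree: "graph_action G cyl_tree_vertices cyl_tree_adj cyl_tree_action"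
  unfolding graph_action_def using group_action_cyl_tree cyl_tree_adj_action by blast

lemma without_inversions_cyl_tree: "without_inversions G cyl_tree_adj cyl_tree_action"
  unfolding without_inversions_def cyl_tree_adj_def incident_def
  by (auto simp: cyl_tree_action_Inl cyl_tree_action_Inr)

lemma incident_orbit_representative:
  assumes F: "edge_orbit_representatives G Adj \<phi> F" and inc: "incident v Y"
  obtains a b g where "(a, b) \<in> F" "g \<in> carrier G"
    "cyl_tree_action g (Inl a) = Inl v" "cyl_tree_action g (Inr (cylinder {a, b})) = Inr Y"
proof -
  obtain e where e: "e \<in> Y" "v \<in> e" and Y: "Y \<in> cylinders" using inc unfolding incident_def by blast
  then have "e \<in> edges" using cylinders_subset_edges by blast
  then obtain p q where pq: "Adj p q" "e = {p, q}" unfolding edges_iff by blast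
  obtain w where w: "Adj v w" "e = {v, w}"
  proof (cases "v = p")
    case False
    then have "v = q" using e(2) pq(2) by blast
    then show ?thesis using that[of p] adj_sym[OF pq(1)] pq(2) by (simp add: insert_commute)
  qed (use that pq in blast)
  obtain a b g where ab: "(a, b) \<in> F" "g \<in> carrier G" "\<phi> g a = v" "\<phi> g b = w"
    using F w(1) unfolding edge_orbit_representatives_def by blast
  have "Adj a b" using F ab(1) unfolding edge_orbit_representatives_def by blast
  then have "a \<in> V" "{a, b} \<in> edges" using adj_in_V unfolding edges_iff by blast+
  then have "cylinder {a, b} \<in> cylinders" unfolding cylinders_def by blast
  have "translate g (cylinder {a, b}) = cylinder e"
    using translate_cylinder[OF \<open>{a, b} \<in> edges\<close> ab(2)] ab(3,4) w(2) by simp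
  also have "\<dots> = Y" using cylinders_eq_cylinder[OF Y e(1)] by simp
  finally have "cyl_tree_action g (Inl a) = Inl v" "cyl_tree_action g (Inr (cylinder {a, b})) = Inr Y"
    using ab(3) \<open>a \<in> V\<close> \<open>cylinder {a, b} \<in> cylinders\<close> by (simp_all add: cyl_tree_action_Inl cyl_tree_action_Inr)
  then show ?thesis using that ab(1,2) by blast
qed

lemma edge_orbit_representatives_cyl_tree:
  "\<exists>F. edge_orbit_representatives G cyl_tree_adj cyl_tree_action F"
proof -
  have "simple_graph V Adj" "graph_action G V Adj \<phi>" "finitely_many_edge_orbits G Adj \<phi>"
    using tree splitting unfolding is_tree_def splitting_def by blast+
  then obtain F where F: "edge_orbit_representatives G Adj \<phi> F"
    using finitely_many_edge_orbits_representatives nontrivial by blast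
  define up where "up = (\<lambda>(a, b). (Inl a, Inr (cylinder {a, b})) :: (nat + nat set set) \<times> (nat + nat set set))"
  define down where "down = (\<lambda>(a, b). (Inr (cylinder {a, b}), Inl a) :: (nat + nat set set) \<times> (nat + nat set set))"
  have "edge_orbit_representatives G cyl_tree_adj cyl_tree_action (up ` F \<union> down ` F)"
    unfolding edge_orbit_representatives_def
  proof (intro conjI allI impI ballI)
    show "finite (up ` F \<union> down ` F)" using F unfolding edge_orbit_representatives_def by simp
    fix p assume "p \<in> up ` F \<union> down ` F"
    then obtain a b where "(a, b) \<in> F" "p = up (a, b) \<or> p = down (a, b)" by auto
    moreover have "cyl_tree_adj (Inl a) (Inr (cylinder {a, b}))" if "(a, b) \<in> F" for a b
      using F incident_edge that unfolding edge_orbit_representatives_def cyl_tree_adj_def by blast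
    ultimately show "case p of (x, y) \<Rightarrow> cyl_tree_adj x y"
      unfolding up_def down_def using cyl_tree_adj_sym by auto
  next
    fix x y assume "cyl_tree_adj x y"
    then obtain v Y where inc: "incident v Y" and xy: "x = Inl v \<and> y = Inr Y \<or> x = Inr Y \<and> y = Inl v"
      unfolding cyl_tree_adj_def by blast
    obtain a b g where "(a, b) \<in> F" "g \<in> carrier G"
      "cyl_tree_action g (Inl a) = Inl v" "cyl_tree_action g (Inr (cylinder {a, b})) = Inr Y"
      using incident_orbit_representative[OF F inc] .
    moreover have "(Inl a, Inr (cylinder {a, b})) \<in> up ` F \<union> down ` F"
      "(Inr (cylinder {a, b}), Inl a) \<in> up ` F \<union> down ` F"
      using \<open>(a, b) \<in> F\<close> unfolding up_def down_def by force+
    ultimately show "\<exists>(a, b)\<in>up ` F \<union> down ` F. \<exists>g\<in>carrier G. cyl_tree_action g a = x \<and> cyl_tree_action g b = y"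
      using xy by (elim disjE) fastforce+
  qed
  then show ?thesis by blast
qed

lemma nontrivial_cyl_tree: "nontrivial_action G cyl_tree_vertices cyl_tree_action"
  unfolding nontrivial_action_def
proof
  assume "\<exists>x\<in>cyl_tree_vertices. \<forall>g\<in>carrier G. cyl_tree_action g x = x"
  then obtain x where x: "x \<in> cyl_tree_vertices" and fixed: "\<And>g. g \<in> carrier G \<Longrightarrow> cyl_tree_action g x = x"
    by blast
  show False
  proof (cases x)
    case (Inl v)
    then show False
      using x fixed nontrivial unfolding cyl_tree_vertices_def nontrivial_action_def
      by (auto simp: cyl_tree_action_Inl)
  next
    case (Inr Y)
    then have Y: "Y \<in> cylinders" using x unfolding cyl_tree_vertices_def by auto
    then have "{g \<in> carrier G. translate g Y = Y} = carrier G"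
      using fixed Inr by (auto simp: cyl_tree_action_Inr)
    then have "parabolic G \<P> (carrier G)" using parabolic_stabilizer_cylinders[OF Y] by simp
    then obtain Q where "Q \<in> conjugates G \<P>" "carrier G \<subseteq> Q" unfolding parabolic_iff_conjugates by blast
    then show False using conjugates_proper conjugates_subset_carrier by blast
  qed
qed

lemma pstab_cyl_tree_edge:
  assumes "cyl_tree_adj x y"
  obtains v Y where "incident v Y" "pstab G cyl_tree_action {x, y} \<subseteq> {g \<in> carrier G. translate g Y = Y}"
proof -
  obtain v Y where i: "incident v Y" and xy: "{x, y} = {Inl v, Inr Y}"
    using assms unfolding cyl_tree_adj_def by blast
  then have "Y \<in> cylinders" unfolding incident_def by blast
  then have "pstab G cyl_tree_action {x, y} \<subseteq> {g \<in> carrier G. translate g Y = Y}"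
    unfolding xy pstab_def by (auto simp: cyl_tree_action_Inr)
  then show ?thesis using i that by blast
qed

lemma over_parabolic_cyl_tree: "over_parabolic G \<P> cyl_tree_adj cyl_tree_action"
  unfolding over_parabolic_def
proof (intro allI impI)
  fix x y assume "cyl_tree_adj x y"
  then obtain v Y where "incident v Y" "pstab G cyl_tree_action {x, y} \<subseteq> {g \<in> carrier G. translate g Y = Y}"
    by (rule pstab_cyl_tree_edge)
  then show "parabolic G \<P> (pstab G cyl_tree_action {x, y})"
    using parabolic_stabilizer_cylinders parabolic_subset unfolding incident_def by blast
qed

text \<open>A segment with four vertices passes through two distinct cylinders adjacent to a common
  vertex of the original tree.\<close>
lemma acylindrical_cyl_tree: "acylindrical G cyl_tree_adj cyl_tree_action 2 C"
  unfolding acylindrical_def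
proof (intro allI impI)
  fix xs assume segment: "gwalk cyl_tree_adj xs \<and> distinct xs \<and> 2 + 2 \<le> length xs"
  then obtain x0 x1 x2 x3 rest where xs: "xs = x0 # x1 # x2 # x3 # rest"
    by (cases xs; cases "tl xs"; cases "tl (tl xs)"; cases "tl (tl (tl xs))") (auto simp: numeral_eq_Suc)
  with segment have walk: "gwalk cyl_tree_adj (x0 # x1 # x2 # x3 # rest)"
    and dist: "distinct (x0 # x1 # x2 # x3 # rest)" by simp_all
  have "\<exists>v Y Y'. Inr Y \<in> set xs \<and> Inr Y' \<in> set xs \<and> Y \<noteq> Y' \<and> incident v Y \<and> incident v Y'"
  proof (cases x0)
    case (Inl u)
    then obtain Y v Y' where "x1 = Inr Y" "x2 = Inl v" "x3 = Inr Y'" "incident v Y" "incident v Y'"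
      using walk by (auto simp: cyl_tree_adj_Inl cyl_tree_adj_Inr)
    then show ?thesis using xs dist by auto
  next
    case (Inr Y)
    then obtain v Y' where "x1 = Inl v" "x2 = Inr Y'" "incident v Y" "incident v Y'"
      using walk by (auto simp: cyl_tree_adj_Inl cyl_tree_adj_Inr)
    then show ?thesis using Inr xs dist by auto
  qed
  then obtain v Y Y' where in_xs: "Inr Y \<in> set xs" "Inr Y' \<in> set xs" and "Y \<noteq> Y'"
    and i: "incident v Y" "incident v Y'" by blast
  then have Y: "Y \<in> cylinders" "Y' \<in> cylinders" unfolding incident_def by auto
  then have "pstab G cyl_tree_action (set xs) \<subseteq> {g \<in> carrier G. translate g Y = Y \<and> translate g Y' = Y'}"
    using in_xs unfolding pstab_def by (auto simp: cyl_tree_action_Inr)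
  moreover have "card_le C {g \<in> carrier G. translate g Y = Y \<and> translate g Y' = Y'}"
    using i \<open>Y \<noteq> Y'\<close> card_le_stabilizer_two_cylinders unfolding incident_def by blast
  ultimately show "finite (pstab G cyl_tree_action (set xs)) \<and> card (pstab G cyl_tree_action (set xs)) \<le> C"
    using card_le_subset unfolding card_le_def by blast
qed

end

section \<open>Relabelling the vertices of a tree by natural numbers\<close>

locale relabelling =
  fixes G :: "('g, 'b) monoid_scheme" (structure)
    and W :: "'v set" and A :: "'v \<Rightarrow> 'v \<Rightarrow> bool" and \<psi> :: "'g \<Rightarrow> 'v \<Rightarrow> 'v" and \<iota> :: "'v \<Rightarrow> nat"
  assumes inj: "inj_on \<iota> W"
    and graph: "simple_graph W A"
    and action: "graph_action G W A \<psi>"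
begin

definition relabel_adj :: "nat \<Rightarrow> nat \<Rightarrow> bool" where
  "relabel_adj x y \<longleftrightarrow> (\<exists>a b. A a b \<and> x = \<iota> a \<and> y = \<iota> b)"

definition relabel_action :: "'g \<Rightarrow> nat \<Rightarrow> nat" where
  "relabel_action g x = (if x \<in> \<iota> ` W then \<iota> (\<psi> g (inv_into W \<iota> x)) else undefined)"

abbreviation unlabel :: "nat \<Rightarrow> 'v" where
  "unlabel \<equiv> inv_into W \<iota>"

lemma group_action: "group_action G W \<psi>"
  using action unfolding graph_action_def by blast

lemma adj_in_W: "A a b \<Longrightarrow> a \<in> W \<and> b \<in> W"
  using graph unfolding simple_graph_def by blast

lemma act_in_W: "g \<in> carrier G \<Longrightarrow> a \<in> W \<Longrightarrow> \<psi> g a \<in> W"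
  using group_action.element_image[OF group_action] by blast

lemma act_one: "a \<in> W \<Longrightarrow> \<psi> \<one> a = a"
  using fun_cong[OF group_action.id_eq_one[OF group_action], of a] by simp

lemma relabel_action_label: "a \<in> W \<Longrightarrow> relabel_action g (\<iota> a) = \<iota> (\<psi> g a)"
  unfolding relabel_action_def using inj by simp

lemma relabel_adj_iff: "relabel_adj x y \<longleftrightarrow> x \<in> \<iota> ` W \<and> y \<in> \<iota> ` W \<and> A (unlabel x) (unlabel y)"
proof
  assume "relabel_adj x y"
  then obtain a b where "A a b" "x = \<iota> a" "y = \<iota> b" unfolding relabel_adj_def by blast
  then show "x \<in> \<iota> ` W \<and> y \<in> \<iota> ` W \<and> A (unlabel x) (unlabel y)" using inj adj_in_W by auto
next
  assume "x \<in> \<iota> ` W \<and> y \<in> \<iota> ` W \<and> A (unlabel x) (unlabel y)"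
  then have "A (unlabel x) (unlabel y)" "x = \<iota> (unlabel x)" "y = \<iota> (unlabel y)"
    by (simp_all add: f_inv_into_f)
  then show "relabel_adj x y" unfolding relabel_adj_def by blast
qed

lemma relabel_adj_label: "A a b \<Longrightarrow> relabel_adj (\<iota> a) (\<iota> b)"
  unfolding relabel_adj_def by blast

lemma gwalk_relabel_adj:
  assumes "gwalk relabel_adj xs" "2 \<le> length xs"
  shows "set xs \<subseteq> \<iota> ` W" and "gwalk A (map unlabel xs)"
proof -
  show "set xs \<subseteq> \<iota> ` W" using gwalk_set_subset[OF assms] relabel_adj_iff by blast
  show "gwalk A (map unlabel xs)" using gwalk_map[OF assms(1)] relabel_adj_iff by blast
qed

lemma distinct_unlabel: "set xs \<subseteq> \<iota> ` W \<Longrightarrow> distinct xs \<Longrightarrow> distinct (map unlabel xs)"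
  by (simp add: distinct_map inj_on_subset[OF inj_on_inv_into])

lemma pstab_relabel_action: "S \<subseteq> W \<Longrightarrow> pstab G relabel_action (\<iota> ` S) = pstab G \<psi> S"
  unfolding pstab_def using inj act_in_W relabel_action_label by (auto simp: inj_on_eq_iff subset_eq)

lemma tree_relabel:
  assumes "is_tree W A"
  shows "is_tree (\<iota> ` W) relabel_adj"
  unfolding is_tree_def
proof (intro conjI)
  show "simple_graph (\<iota> ` W) relabel_adj"
    unfolding simple_graph_def
  proof (intro allI impI)
    fix x y assume "relabel_adj x y"
    then obtain a b where ab: "A a b" "x = \<iota> a" "y = \<iota> b" unfolding relabel_adj_def by blast
    then have "a \<in> W" "b \<in> W" "a \<noteq> b" "A b a" using graph unfolding simple_graph_def by blast+
    then show "x \<in> \<iota> ` W \<and> y \<in> \<iota> ` W \<and> x \<noteq> y \<and> relabel_adj y x"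
      using ab inj relabel_adj_label by (auto simp: inj_on_eq_iff)
  qed
  show "\<iota> ` W \<noteq> {}" using assms unfolding is_tree_def by blast
  have "A\<^sup>*\<^sup>* a b \<Longrightarrow> relabel_adj\<^sup>*\<^sup>* (\<iota> a) (\<iota> b)" for a b
    by (induction rule: rtranclp_induct) (auto intro: rtranclp.rtrancl_into_rtrancl relabel_adj_label)
  then show "graph_connected (\<iota> ` W) relabel_adj"
    using assms unfolding is_tree_def graph_connected_iff_rtranclp by blast
  show "\<not> (\<exists>c. cycle_list relabel_adj c)"
  proof
    assume "\<exists>c. cycle_list relabel_adj c"
    then obtain c where c: "cycle_list relabel_adj c" by blast
    then have "gwalk relabel_adj c" "2 \<le> length c" "c \<noteq> []" unfolding cycle_list_def by auto
    then have "cycle_list A (map unlabel c)"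
      using c gwalk_relabel_adj distinct_unlabel relabel_adj_iff
      unfolding cycle_list_def by (simp add: hd_map last_map)
    then show False using assms unfolding is_tree_def by blast
  qed
qed

lemma graph_action_relabel: "graph_action G (\<iota> ` W) relabel_adj relabel_action"
  unfolding graph_action_def
proof (intro conjI ballI allI impI)
  show "group_action G (\<iota> ` W) relabel_action"
  proof (rule group_actionI)
    show "group G" using group_action group_action.group_hom group_hom.axioms(1) by blast
    show "relabel_action g \<in> extensional (\<iota> ` W)" for g
      unfolding relabel_action_def extensional_def by simp
    show "relabel_action g x \<in> \<iota> ` W" if "g \<in> carrier G" "x \<in> \<iota> ` W" for g x
      using that act_in_W relabel_action_label by auto
    show "relabel_action \<one> x = x" if "x \<in> \<iota> ` W" for x
      using that act_one relabel_action_label by auto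
    show "relabel_action (g \<otimes> h) x = relabel_action g (relabel_action h x)"
      if "g \<in> carrier G" "h \<in> carrier G" "x \<in> \<iota> ` W" for g h x
      using that group_action.composition_rule[OF group_action] act_in_W relabel_action_label by auto
  qed
  fix g x y assume g: "g \<in> carrier G" and "relabel_adj x y"
  then obtain a b where ab: "A a b" "x = \<iota> a" "y = \<iota> b" unfolding relabel_adj_def by blast
  then have "A (\<psi> g a) (\<psi> g b)" using action g unfolding graph_action_def by blast
  then show "relabel_adj (relabel_action g x) (relabel_action g y)"
    using ab adj_in_W relabel_action_label relabel_adj_label by simp
qed

lemma without_inversions_relabel:
  assumes "without_inversions G A \<psi>"
  shows "without_inversions G relabel_adj relabel_action"
  unfolding without_inversions_def
proof (intro ballI allI impI notI)
  fix g x y assume g: "g \<in> carrier G" and "relabel_adj x y"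
    and swap: "relabel_action g x = y \<and> relabel_action g y = x"
  then obtain a b where ab: "A a b" "x = \<iota> a" "y = \<iota> b" unfolding relabel_adj_def by blast
  then have "a \<in> W" "b \<in> W" using adj_in_W by auto
  then have "\<psi> g a = b \<and> \<psi> g b = a"
    using swap ab g act_in_W inj relabel_action_label by (simp add: inj_on_eq_iff)
  then show False using assms g ab(1) unfolding without_inversions_def by blast
qed

lemma edge_orbit_representatives_relabel:
  assumes "edge_orbit_representatives G A \<psi> F"
  shows "edge_orbit_representatives G relabel_adj relabel_action (map_prod \<iota> \<iota> ` F)"
  unfolding edge_orbit_representatives_def
proof (intro conjI allI impI)
  show "finite (map_prod \<iota> \<iota> ` F)" using assms unfolding edge_orbit_representatives_def by blast
  have "A a b" if "(a, b) \<in> F" for a b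
    using assms that unfolding edge_orbit_representatives_def by blast
  then show "\<forall>(x, y)\<in>map_prod \<iota> \<iota> ` F. relabel_adj x y" using relabel_adj_label by auto
  fix x y assume "relabel_adj x y"
  then obtain u v where uv: "A u v" "x = \<iota> u" "y = \<iota> v" unfolding relabel_adj_def by blast
  then obtain a b g where "(a, b) \<in> F" "g \<in> carrier G" "\<psi> g a = u" "\<psi> g b = v"
    using assms unfolding edge_orbit_representatives_def by blast
  moreover from this have "a \<in> W" "b \<in> W"
    using assms adj_in_W unfolding edge_orbit_representatives_def by blast+
  ultimately show "\<exists>(a, b)\<in>map_prod \<iota> \<iota> ` F. \<exists>g\<in>carrier G. relabel_action g a = x \<and> relabel_action g b = y"
    using uv relabel_action_label by (intro bexI[of _ "(\<iota> a, \<iota> b)"]) auto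
qed

lemma nontrivial_relabel:
  assumes "nontrivial_action G W \<psi>"
  shows "nontrivial_action G (\<iota> ` W) relabel_action"
  unfolding nontrivial_action_def
proof
  assume "\<exists>x\<in>\<iota> ` W. \<forall>g\<in>carrier G. relabel_action g x = x"
  then obtain a where "a \<in> W" and fixed: "\<forall>g\<in>carrier G. \<iota> (\<psi> g a) = \<iota> a"
    using relabel_action_label by auto
  then have "\<forall>g\<in>carrier G. \<psi> g a = a" using inj act_in_W by (simp add: inj_on_eq_iff)
  then show False using assms \<open>a \<in> W\<close> unfolding nontrivial_action_def by blast
qed

lemma over_parabolic_relabel:
  assumes "over_parabolic G \<P> A \<psi>"
  shows "over_parabolic G \<P> relabel_adj relabel_action"
  unfolding over_parabolic_def
proof (intro allI impI)
  fix x y assume "relabel_adj x y"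
  then obtain a b where ab: "A a b" "x = \<iota> a" "y = \<iota> b" unfolding relabel_adj_def by blast
  then have "pstab G relabel_action {x, y} = pstab G \<psi> {a, b}"
    using pstab_relabel_action[of "{a, b}"] adj_in_W by simp
  then show "parabolic G \<P> (pstab G relabel_action {x, y})"
    using assms ab(1) unfolding over_parabolic_def by simp
qed

lemma acylindrical_relabel:
  assumes "acylindrical G A \<psi> k C"
  shows "acylindrical G relabel_adj relabel_action k C"
  unfolding acylindrical_def
proof (intro allI impI)
  fix xs assume xs: "gwalk relabel_adj xs \<and> distinct xs \<and> k + 2 \<le> length xs"
  then have walk: "gwalk relabel_adj xs" and "distinct xs" and len: "2 \<le> length xs" by simp_all
  note sub = gwalk_relabel_adj(1)[OF walk len]
  have "gwalk A (map unlabel xs) \<and> distinct (map unlabel xs) \<and> k + 2 \<le> length (map unlabel xs)"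
    using gwalk_relabel_adj(2)[OF walk len] distinct_unlabel[OF sub \<open>distinct xs\<close>] xs by simp
  then have "card_le C (pstab G \<psi> (set (map unlabel xs)))"
    using assms[unfolded acylindrical_def, rule_format, of "map unlabel xs"] unfolding card_le_def by simp
  moreover have "unlabel ` set xs \<subseteq> W"
    using sub by (auto intro: inv_into_into)
  then have "pstab G relabel_action (\<iota> ` unlabel ` set xs) = pstab G \<psi> (unlabel ` set xs)"
    by (rule pstab_relabel_action)
  moreover have "\<iota> ` unlabel ` set xs = set xs"
    using sub by (force simp: f_inv_into_f)
  ultimately have "card_le C (pstab G relabel_action (set xs))" by simp
  then show "finite (pstab G relabel_action (set xs)) \<and> card (pstab G relabel_action (set xs)) \<le> C"
    unfolding card_le_def .
qed

end

context parabolic_splitting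
begin

text \<open>Distinct cylinders are disjoint, so a cylinder is determined by any one of its edges.\<close>
definition cylinder_code :: "nat set set \<Rightarrow> nat" where
  "cylinder_code Y = prod_encode (SOME (u, v). {u, v} \<in> Y)"

definition cyl_tree_encode :: "nat + nat set set \<Rightarrow> nat" where
  "cyl_tree_encode = sum_encode \<circ> map_sum id cylinder_code"

lemma cylinder_code_edge:
  assumes "Y \<in> cylinders"
  obtains u v where "{u, v} \<in> Y" "cylinder_code Y = prod_encode (u, v)"
proof -
  obtain e where "e \<in> Y" using cylinders_nonempty[OF assms] by blast
  moreover from this have "e \<in> edges" using assms cylinders_subset_edges by blast
  then obtain u v where "e = {u, v}" unfolding edges_iff by blast
  ultimately have "(\<lambda>(u, v). {u, v} \<in> Y) (u, v)" by simp
  then have "(\<lambda>(u, v). {u, v} \<in> Y) (SOME (u, v). {u, v} \<in> Y)" by (rule someI)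
  then show ?thesis using that unfolding cylinder_code_def by (cases "SOME (u, v). {u, v} \<in> Y") simp
qed

lemma inj_on_cylinder_code: "inj_on cylinder_code cylinders"
proof (rule inj_onI)
  fix Y Z assume Y: "Y \<in> cylinders" and Z: "Z \<in> cylinders" and eq: "cylinder_code Y = cylinder_code Z"
  obtain u v where uv: "{u, v} \<in> Y" "cylinder_code Y = prod_encode (u, v)"
    using cylinder_code_edge[OF Y] .
  obtain u' v' where uv': "{u', v'} \<in> Z" "cylinder_code Z = prod_encode (u', v')"
    using cylinder_code_edge[OF Z] .
  have "(u, v) = (u', v')" using eq uv(2) uv'(2) by simp
  then show "Y = Z" using cylinders_disjoint[OF Y Z uv(1)] uv'(1) by simp
qed

lemma inj_on_cyl_tree_encode: "inj_on cyl_tree_encode cyl_tree_vertices"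
proof (rule inj_onI)
  fix x y assume x: "x \<in> cyl_tree_vertices" and y: "y \<in> cyl_tree_vertices"
    and "cyl_tree_encode x = cyl_tree_encode y"
  then have eq: "map_sum id cylinder_code x = map_sum id cylinder_code y"
    unfolding cyl_tree_encode_def using inj_sum_encode[of UNIV] by (simp add: inj_on_eq_iff)
  show "x = y"
  proof (cases x; cases y)
    fix Y Z assume "x = Inr Y" "y = Inr Z"
    then show "x = y"
      using eq x y inj_on_cylinder_code unfolding cyl_tree_vertices_def by (auto simp: inj_on_eq_iff)
  qed (use eq in auto)
qed

theorem acylindrical_parabolic_splitting:
  "\<exists>V Adj \<phi>. splitting G V Adj \<phi> \<and> nontrivial_action G V \<phi> \<and> over_parabolic G \<P> Adj \<phi> \<and>
     acylindrical G Adj \<phi> 2 C"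
proof -
  interpret relabelling G cyl_tree_vertices cyl_tree_adj cyl_tree_action cyl_tree_encode
    using inj_on_cyl_tree_encode simple_graph_cyl_tree graph_action_cyl_tree by unfold_locales
  obtain F where F: "edge_orbit_representatives G cyl_tree_adj cyl_tree_action F"
    using edge_orbit_representatives_cyl_tree by blast
  have "splitting G (cyl_tree_encode ` cyl_tree_vertices) relabel_adj relabel_action"
    unfolding splitting_def
    using tree_relabel[OF tree_cyl_tree] graph_action_relabel
      without_inversions_relabel[OF without_inversions_cyl_tree]
      edge_orbit_representatives_imp_finitely_many[OF edge_orbit_representatives_relabel[OF F]]
    by (intro conjI)
  moreover note nontrivial_relabel[OF nontrivial_cyl_tree] over_parabolic_relabel[OF over_parabolic_cyl_tree]
    acylindrical_relabel[OF acylindrical_cyl_tree]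
  ultimately show ?thesis by blast
qed

end

lemma rel_hyp_peripheral_infinite: "rel_hyp G \<P> \<Longrightarrow> P \<in> \<P> \<Longrightarrow> infinite P"
  unfolding rel_hyp_def by blast

theorem lemma3p6:
  fixes G :: "('g, 'b) monoid_scheme" and \<P> :: "'g set set" and C :: nat
  assumes "rel_hyp G \<P>"
    and "almost_malnormal G \<P> C"
    and "\<forall>P\<in>\<P>. slender_subgroup G P"
    and "\<exists>V Adj \<phi>. splitting G V Adj \<phi> \<and> nontrivial_action G V \<phi> \<and> over_parabolic G \<P> Adj \<phi>"
  shows "\<exists>V Adj \<phi>. splitting G V Adj \<phi> \<and> nontrivial_action G V \<phi> \<and> over_parabolic G \<P> Adj \<phi> \<and>
           acylindrical G Adj \<phi> 2 C"
proof -
  obtain V Adj \<phi> where "splitting G V Adj \<phi>" "nontrivial_action G V \<phi>" "over_parabolic G \<P> Adj \<phi>"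
    using assms(4) by blast
  moreover have "almost_malnormal_family G \<P> C"
    using assms(1,2) rel_hyp_peripheral_infinite[OF assms(1)]
    unfolding rel_hyp_def almost_malnormal_family_def almost_malnormal_family_axioms_def by blast
  ultimately interpret parabolic_splitting G \<P> C V Adj \<phi>
    by (intro parabolic_splitting.intro parabolic_splitting_axioms.intro)
  show ?thesis by (rule acylindrical_parabolic_splitting)
qed

end
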